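(* Let $\mathcal{H}_A\cong\mathbb{C}^d$ and $\mathcal{H}_B$ be finite-dimensional, let $\Phi_1,\Phi_2:\mathcal{L}(\mathcal{H}_A)\to\mathcal{L}(\mathcal{H}_B)$ be quantum channels, $\Delta_\Phi=\Phi_1-\Phi_2$, and let $r=\operatorname{rank}M(\Delta_\Phi)$. Then $$\|\Delta_\Phi\|_{\mathrm{ME}}\le \frac{r}{d}\,\|\Delta_\Phi\|_\diamond .$$
   Context: For a linear map $\mathcal{S}:\mathcal{L}(\mathcal{H}_A)\to\mathcal{L}(\mathcal{H}_B)$ with $\{\ket{i}\}$ an orthonormal basis of $\mathcal{H}_A$: the Choi operator is $J(\mathcal{S})=\sum_{i,j}\mathcal{S}(\ket{i}\!\bra{j})\otimes\ket{i}\!\bra{j}\in\mathcal{L}(\mathcal{H}_B\otimes\mathcal{H}_A)$; the M-operator is $M(\mathcal{S})=\mathrm{Tr}_B[\,|J(\mathcal{S})|\,]$ with $|X|=\sqrt{X^\dagger X}$; the ME-norm is $\|\mathcal{S}\|_{\mathrm{ME}}=\|J(\mathcal{S})/d\|_1$; the diamond norm is $\|\mathcal{S}\|_\diamond=\max_{\rho_{AA'}}\|(\mathcal{S}\otimes\mathrm{id}_{A'})(\rho_{AA'})\|_1$ over finite-dimensional ancillas $\mathcal{H}_{A'}$ and states $\rho_{AA'}$, with $\|X\|_1=\mathrm{Tr}\sqrt{X^\dagger X}$. *)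

theory Defs
  imports "Jordan_Normal_Form.Schur_Decomposition" "Jordan_Normal_Form.DL_Rank"
begin

text \<open>H_A = C^d, H_B = C^dB. A tensor product H_X (x) H_Y of dimensions m, n is C^(m*n),
  with basis vector |x>|y> at index x*n + y.\<close>

definition mtrace :: "complex mat \<Rightarrow> complex" where
  "mtrace A = (\<Sum>i<dim_row A. A $$ (i,i))"

definition psd :: "nat \<Rightarrow> complex mat \<Rightarrow> bool" where
  "psd n A \<longleftrightarrow> A \<in> carrier_mat n n \<and> mat_adjoint A = A \<and>
     (\<forall>v \<in> carrier_vec n. 0 \<le> Re (conjugate v \<bullet> (A *\<^sub>v v)))"

definition mat_abs :: "complex mat \<Rightarrow> complex mat" where
  "mat_abs X = (THE P. psd (dim_col X) P \<and> P * P = mat_adjoint X * X)"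

definition trace_norm :: "complex mat \<Rightarrow> real" where
  "trace_norm X = Re (mtrace (mat_abs X))"

definition lin_map :: "nat \<Rightarrow> nat \<Rightarrow> (complex mat \<Rightarrow> complex mat) \<Rightarrow> bool" where
  "lin_map d dB S \<longleftrightarrow>
     (\<forall>X \<in> carrier_mat d d. S X \<in> carrier_mat dB dB) \<and>
     (\<forall>X \<in> carrier_mat d d. \<forall>Y \<in> carrier_mat d d. S (X + Y) = S X + S Y) \<and>
     (\<forall>X \<in> carrier_mat d d. \<forall>c. S (c \<cdot>\<^sub>m X) = c \<cdot>\<^sub>m S X)"

text \<open>(S (x) id_k) acting on L(C^d (x) C^k), result in L(C^dB (x) C^k).\<close>
definition tensor_id :: "nat \<Rightarrow> nat \<Rightarrow> nat \<Rightarrow> (complex mat \<Rightarrow> complex mat) \<Rightarrow> complex mat \<Rightarrow> complex mat" where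
  "tensor_id d dB k S X = mat (dB * k) (dB * k) (\<lambda>(r, s).
     S (mat d d (\<lambda>(a, b). X $$ (a * k + r mod k, b * k + s mod k))) $$ (r div k, s div k))"

definition quantum_channel :: "nat \<Rightarrow> nat \<Rightarrow> (complex mat \<Rightarrow> complex mat) \<Rightarrow> bool" where
  "quantum_channel d dB S \<longleftrightarrow> lin_map d dB S \<and>
     (\<forall>k. \<forall>X. psd (d * k) X \<longrightarrow> psd (dB * k) (tensor_id d dB k S X)) \<and>
     (\<forall>X \<in> carrier_mat d d. mtrace (S X) = mtrace X)"

text \<open>Choi operator J(S) = sum_{i,j} S(|i><j|) (x) |i><j| in L(H_B (x) H_A).\<close>
definition choi :: "nat \<Rightarrow> nat \<Rightarrow> (complex mat \<Rightarrow> complex mat) \<Rightarrow> complex mat" where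
  "choi d dB S = mat (dB * d) (dB * d) (\<lambda>(r, s).
     S (mat d d (\<lambda>(a, b). if a = r mod d \<and> b = s mod d then 1 else 0)) $$ (r div d, s div d))"

text \<open>Partial trace over the first factor H_B of an operator on H_B (x) H_A.\<close>
definition ptrace_B :: "nat \<Rightarrow> nat \<Rightarrow> complex mat \<Rightarrow> complex mat" where
  "ptrace_B d dB Y = mat d d (\<lambda>(i, j). \<Sum>b<dB. Y $$ (b * d + i, b * d + j))"

definition M_op :: "nat \<Rightarrow> nat \<Rightarrow> (complex mat \<Rightarrow> complex mat) \<Rightarrow> complex mat" where
  "M_op d dB S = ptrace_B d dB (mat_abs (choi d dB S))"

definition me_norm :: "nat \<Rightarrow> nat \<Rightarrow> (complex mat \<Rightarrow> complex mat) \<Rightarrow> real" where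
  "me_norm d dB S = trace_norm ((1 / of_nat d) \<cdot>\<^sub>m choi d dB S)"

definition density :: "nat \<Rightarrow> complex mat \<Rightarrow> bool" where
  "density n \<rho> \<longleftrightarrow> psd n \<rho> \<and> mtrace \<rho> = 1"

text \<open>Diamond norm: supremum over all finite ancilla dimensions k and states rho on C^d (x) C^k
  (the supremum is attained, i.e. it is the max of the paper).\<close>
definition diamond_norm :: "nat \<Rightarrow> nat \<Rightarrow> (complex mat \<Rightarrow> complex mat) \<Rightarrow> real" where
  "diamond_norm d dB S = Sup {trace_norm (tensor_id d dB k S \<rho>) | k \<rho>. density (d * k) \<rho>}"

definition mat_rank :: "complex mat \<Rightarrow> nat" where
  "mat_rank A = vec_space.rank (dim_row A) A"

end

theory Submission
  imports Defs "Jordan_Normal_Form.Spectral_Radius"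
begin

text \<open>
  Let \<open>J\<close> be the Choi operator of \<open>\<Delta> = \<Phi>\<^sub>1 - \<Phi>\<^sub>2\<close>, \<open>M = Tr\<^sub>B |J|\<close>, and \<open>P\<close> the orthogonal
  projection onto the support of \<open>M\<close>, so that \<open>tr P \<le> rank M\<close>. If \<open>M w = 0\<close>, the quadratic
  forms of the positive operator \<open>|J|\<close> at the vectors \<open>|b\<rangle> \<otimes> w\<close> are nonnegative and sum up to
  \<open>\<langle>w|M|w\<rangle> = 0\<close>, so \<open>|J|\<close>, and with it \<open>J\<close>, annihilates them. Hence \<open>J (1 \<otimes> P) = J\<close>, and the
  positive input \<open>(1 \<otimes> P)|\<Omega>\<rangle>\<langle>\<Omega>|(1 \<otimes> P)\<close> of trace \<open>tr P\<close> is mapped by \<open>\<Delta> \<otimes> id\<close> to \<open>J\<close>.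
  Normalising this input to a state gives \<open>\<parallel>J\<parallel>\<^sub>1 \<le> tr P \<cdot> \<parallel>\<Delta>\<parallel>\<^sub>\<diamond>\<close>, and dividing by \<open>d\<close> yields
  the claim.
\<close>

section \<open>Adjoints, Hermitian and unitary matrices\<close>

lemma mat_adjoint_dim[simp]:
  "dim_row (mat_adjoint A) = dim_col A" "dim_col (mat_adjoint A) = dim_row A"
  unfolding mat_adjoint_def by (auto simp: mat_of_rows_def)

lemma mat_adjoint_index[simp]:
  "i < dim_col A \<Longrightarrow> j < dim_row A \<Longrightarrow> mat_adjoint A $$ (i,j) = cnj (A $$ (j,i))"
  unfolding mat_adjoint_def by (auto simp: mat_of_rows_def)

lemma mat_adjoint_carrier[simp]: "A \<in> carrier_mat n m \<Longrightarrow> mat_adjoint A \<in> carrier_mat m n"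
  unfolding carrier_mat_def by simp

lemma mult_carrier_mat_square[simp]:
  "A \<in> carrier_mat n n \<Longrightarrow> B \<in> carrier_mat n n \<Longrightarrow> A * B \<in> carrier_mat n n"
  by auto

lemma index_mult_mat_sum:
  "A \<in> carrier_mat n m \<Longrightarrow> B \<in> carrier_mat m k \<Longrightarrow> i < n \<Longrightarrow> j < k \<Longrightarrow>
   (A * B) $$ (i,j) = (\<Sum>l<m. A $$ (i,l) * B $$ (l,j))"
  by (auto simp: scalar_prod_def lessThan_atLeast0 intro!: sum.cong)

lemma index_mult_mat_vec_sum:
  "A \<in> carrier_mat n m \<Longrightarrow> v \<in> carrier_vec m \<Longrightarrow> i < n \<Longrightarrow>
   (A *\<^sub>v v) $ i = (\<Sum>j<m. A $$ (i,j) * v $ j)"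
  by (auto simp: scalar_prod_def lessThan_atLeast0 intro!: sum.cong)

lemma quadratic_form_sum:
  "A \<in> carrier_mat n n \<Longrightarrow> v \<in> carrier_vec n \<Longrightarrow>
   conjugate v \<bullet> (A *\<^sub>v v) = (\<Sum>i<n. cnj (v $ i) * (\<Sum>j<n. A $$ (i,j) * v $ j))"
  by (auto simp: scalar_prod_def lessThan_atLeast0 index_mult_mat_vec_sum[of _ n n] intro!: sum.cong)

lemma mat_adjoint_mult:
  "(A :: complex mat) \<in> carrier_mat n m \<Longrightarrow> B \<in> carrier_mat m k \<Longrightarrow>
   mat_adjoint (A * B) = mat_adjoint B * mat_adjoint A"
  by (rule eq_matI) (auto simp del: index_mult_mat(1)
      simp: index_mult_mat_sum[of _ k m _ n] index_mult_mat_sum[of _ n m _ k] cnj_sum mult.commute)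

lemma mat_adjoint_minus:
  "(A :: complex mat) \<in> carrier_mat n m \<Longrightarrow> B \<in> carrier_mat n m \<Longrightarrow>
   mat_adjoint (A - B) = mat_adjoint A - mat_adjoint B"
  by (rule eq_matI) auto

lemma row_mat_adjoint: "k < dim_col (A :: complex mat) \<Longrightarrow> row (mat_adjoint A) k = conjugate (col A k)"
  by (rule eq_vecI) auto

lemma scalar_prod_mat_adjoint:
  fixes A :: "complex mat"
  assumes "A \<in> carrier_mat n n" "v \<in> carrier_vec n" "y \<in> carrier_vec n"
  shows "conjugate v \<bullet> (A *\<^sub>v y) = conjugate (mat_adjoint A *\<^sub>v v) \<bullet> y"
proof -
  have "conjugate v \<bullet> (A *\<^sub>v y) = (\<Sum>i<n. \<Sum>j<n. cnj (v $ i) * A $$ (i,j) * y $ j)"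
    using assms by (auto simp: scalar_prod_def lessThan_atLeast0 index_mult_mat_vec_sum[of _ n n]
        sum_distrib_left mult.assoc intro!: sum.cong)
  also have "\<dots> = (\<Sum>j<n. \<Sum>i<n. cnj (v $ i) * A $$ (i,j) * y $ j)" by (rule sum.swap)
  also have "\<dots> = conjugate (mat_adjoint A *\<^sub>v v) \<bullet> y"
    using assms by (auto simp: scalar_prod_def lessThan_atLeast0 index_mult_mat_vec_sum[of _ n n]
        sum_distrib_left sum_distrib_right cnj_sum mult_ac intro!: sum.cong)
  finally show ?thesis .
qed

definition hermitian :: "nat \<Rightarrow> complex mat \<Rightarrow> bool" where
  "hermitian n A \<longleftrightarrow> A \<in> carrier_mat n n \<and> mat_adjoint A = A"

definition unitary :: "nat \<Rightarrow> complex mat \<Rightarrow> bool" where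
  "unitary n U \<longleftrightarrow> U \<in> carrier_mat n n \<and> mat_adjoint U * U = 1\<^sub>m n \<and> U * mat_adjoint U = 1\<^sub>m n"

lemma psd_hermitian: "psd n A \<Longrightarrow> hermitian n A"
  unfolding psd_def hermitian_def by blast

lemma hermitian_minus: "hermitian n A \<Longrightarrow> hermitian n B \<Longrightarrow> hermitian n (A - B)"
  unfolding hermitian_def by (auto simp: mat_adjoint_minus)

lemma hermitian_index: "hermitian n A \<Longrightarrow> i < n \<Longrightarrow> j < n \<Longrightarrow> cnj (A $$ (i,j)) = A $$ (j,i)"
  unfolding hermitian_def by (metis carrier_matD mat_adjoint_index)

lemma unitary_carrier: "unitary n U \<Longrightarrow> U \<in> carrier_mat n n"
  unfolding unitary_def by blast

lemma unitary_mult: assumes "unitary n U" "unitary n V" shows "unitary n (U * V)"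
proof -
  have c: "U \<in> carrier_mat n n" "V \<in> carrier_mat n n" "mat_adjoint U \<in> carrier_mat n n"
    "mat_adjoint V \<in> carrier_mat n n" using assms unfolding unitary_def by auto
  have u: "mat_adjoint U * U = 1\<^sub>m n" "U * mat_adjoint U = 1\<^sub>m n"
    "mat_adjoint V * V = 1\<^sub>m n" "V * mat_adjoint V = 1\<^sub>m n" using assms unfolding unitary_def by auto
  have "mat_adjoint (U * V) * (U * V) = mat_adjoint V * (mat_adjoint U * (U * V))"
    using c by (simp add: mat_adjoint_mult[of _ n n _ n] assoc_mult_mat[of _ n n _ n _ n])
  also have "mat_adjoint U * (U * V) = V"
    using assoc_mult_mat[OF c(3) c(1) c(2)] u(1) c(2) by simp
  finally have "mat_adjoint (U * V) * (U * V) = 1\<^sub>m n" using u by simp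
  moreover have "(U * V) * mat_adjoint (U * V) = U * (V * (mat_adjoint V * mat_adjoint U))"
    using c by (simp add: mat_adjoint_mult[of _ n n _ n]
        assoc_mult_mat[OF c(1) c(2) mult_carrier_mat[OF c(4) c(3)]])
  moreover have "V * (mat_adjoint V * mat_adjoint U) = mat_adjoint U"
    using assoc_mult_mat[OF c(2) c(4) c(3)] u(4) left_mult_one_mat[OF c(3)] by simp
  ultimately show ?thesis using c u unfolding unitary_def by simp
qed

lemma unitary_adjoint_mult_col:
  assumes "unitary n U" "k < n"
  shows "mat_adjoint U *\<^sub>v col U k = unit_vec n k"
proof -
  have U: "U \<in> carrier_mat n n" "mat_adjoint U * U = 1\<^sub>m n" using assms unfolding unitary_def by auto
  show ?thesis using col_mult2[OF mat_adjoint_carrier[OF U(1)] U(1) assms(2)] U(2) col_one assms(2) by simp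
qed

lemma unitary_col_norm:
  assumes "unitary n U" "k < n"
  shows "conjugate (col U k) \<bullet> col U k = 1"
proof -
  have U: "U \<in> carrier_mat n n" "mat_adjoint U * U = 1\<^sub>m n" using assms unfolding unitary_def by auto
  have "(mat_adjoint U * U) $$ (k,k) = conjugate (col U k) \<bullet> col U k"
    using U(1) assms(2) by (simp add: row_mat_adjoint)
  thus ?thesis using U(2) assms(2) by simp
qed

lemma cscalar_prod_smult:
  "v \<in> carrier_vec n \<Longrightarrow> w \<in> carrier_vec n \<Longrightarrow>
   (a \<cdot>\<^sub>v v) \<bullet>c (b \<cdot>\<^sub>v (w :: complex vec)) = a * cnj b * (v \<bullet>c w)"
  by (simp add: conjugate_smult_vec scalar_prod_smult_distrib smult_scalar_prod_distrib)

definition vec_normalize :: "complex vec \<Rightarrow> complex vec" where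
  "vec_normalize w = complex_of_real (1 / sqrt (Re (w \<bullet>c w))) \<cdot>\<^sub>v w"

lemma vec_normalize_carrier[simp]: "w \<in> carrier_vec n \<Longrightarrow> vec_normalize w \<in> carrier_vec n"
  by (simp add: vec_normalize_def)

lemma vec_normalize_orthogonal:
  "v \<in> carrier_vec n \<Longrightarrow> w \<in> carrier_vec n \<Longrightarrow> v \<bullet>c w = 0 \<Longrightarrow>
   vec_normalize v \<bullet>c vec_normalize w = 0"
  unfolding vec_normalize_def by (subst cscalar_prod_smult[of _ n]) auto

lemma vec_normalize_norm:
  assumes "w \<in> carrier_vec n" "w \<noteq> 0\<^sub>v n"
  shows "vec_normalize w \<bullet>c vec_normalize w = 1"
proof -
  define s where "s = Re (w \<bullet>c w)"
  have "w \<bullet>c w > 0" using assms by simp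
  hence ww: "w \<bullet>c w = complex_of_real s" and s: "s > 0"
    by (auto simp: s_def less_complex_def complex_eq_iff)
  have "vec_normalize w \<bullet>c vec_normalize w
      = complex_of_real (1 / sqrt s) * cnj (complex_of_real (1 / sqrt s)) * complex_of_real s"
    unfolding vec_normalize_def cscalar_prod_smult[OF assms(1) assms(1)] ww s_def[symmetric]
    by (simp only: Re_complex_of_real)
  also have "\<dots> = complex_of_real (1 / sqrt s * (1 / sqrt s) * s)"
    by (simp only: complex_cnj_complex_of_real of_real_mult)
  also have "1 / sqrt s * (1 / sqrt s) * s = 1" using s by (simp add: field_simps)
  finally show ?thesis by simp
qed

lemma unitary_of_orthonormal_cols:
  assumes us: "set us \<subseteq> carrier_vec n" "length us = n"
    and orth: "\<And>i j. i < n \<Longrightarrow> j < n \<Longrightarrow> us ! j \<bullet>c us ! i = (if i = j then 1 else 0)"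
  shows "unitary n (mat_of_cols n us)"
proof -
  let ?W = "mat_of_cols n us"
  have W: "?W \<in> carrier_mat n n" using us by (metis mat_of_cols_carrier(1))
  have "mat_adjoint ?W * ?W = 1\<^sub>m n"
  proof (rule eq_matI)
    fix i j assume "i < dim_row (1\<^sub>m n :: complex mat)" "j < dim_col (1\<^sub>m n :: complex mat)"
    hence ij: "i < n" "j < n" by auto
    have "(mat_adjoint ?W * ?W) $$ (i,j) = conjugate (us ! i) \<bullet> us ! j"
      using ij us W by (simp add: row_mat_adjoint col_mat_of_cols subsetD)
    also have "\<dots> = us ! j \<bullet>c us ! i"
      using ij us by (intro comm_scalar_prod[of _ n]) (auto simp: subsetD)
    finally show "(mat_adjoint ?W * ?W) $$ (i,j) = 1\<^sub>m n $$ (i,j)" using orth[OF ij] ij by simp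
  qed (use W in auto)
  moreover hence "?W * mat_adjoint ?W = 1\<^sub>m n"
    using mat_mult_left_right_inverse[OF mat_adjoint_carrier[OF W] W] by simp
  ultimately show ?thesis using W unfolding unitary_def by simp
qed

lemma unitary_with_first_col:
  assumes v: "v \<in> carrier_vec n" "v \<noteq> 0\<^sub>v n"
  obtains W c where "unitary n W" "col W 0 = c \<cdot>\<^sub>v v"
proof -
  interpret cof_vec_space n "TYPE(complex)" .
  define b where "b = basis_completion v"
  from basis_completion[OF v, folded b_def]
  have b: "set b \<subseteq> carrier_vec n" and dist_b: "distinct b" and indep: "\<not> lin_dep (set b)"
    and hdb: "hd b = v" and len_b: "length b = n" by auto
  have n: "n > 0" using v by (cases n) (auto intro!: eq_vecI)
  from hdb len_b n obtain vs where bv: "b = v # vs" by (cases b) auto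
  define ws where "ws = gram_schmidt n b"
  from gram_schmidt_result[OF b dist_b indep ws_def]
  have ws: "corthogonal ws" "set ws \<subseteq> carrier_vec n" "length ws = n" using len_b by auto
  have ws_carrier: "i < n \<Longrightarrow> ws ! i \<in> carrier_vec n" for i using ws by auto
  have ws_nonzero: "i < n \<Longrightarrow> ws ! i \<noteq> 0\<^sub>v n" for i
    using corthogonalD[OF ws(1), of i i] ws(3) by auto
  have "ws ! 0 = v"
    using gram_schmidt_hd[OF v(1)] ws(3) n unfolding ws_def bv by (metis hd_conv_nth length_0_conv not_less0)
  define us where "us = map vec_normalize ws"
  have us: "set us \<subseteq> carrier_vec n" "length us = n" using ws unfolding us_def by auto
  have orth: "us ! j \<bullet>c us ! i = (if i = j then 1 else 0)" if "i < n" "j < n" for i j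
    using vec_normalize_norm[OF ws_carrier ws_nonzero] vec_normalize_orthogonal[OF ws_carrier ws_carrier]
      corthogonalD[OF ws(1), of j i] that ws(3) unfolding us_def by auto
  have "col (mat_of_cols n us) 0 = us ! 0" by (rule col_mat_of_cols) (use us n in auto)
  also have "us ! 0 = vec_normalize v" using \<open>ws ! 0 = v\<close> ws(3) n unfolding us_def by simp
  finally have "col (mat_of_cols n us) 0 = vec_normalize v" .
  with unitary_of_orthonormal_cols[OF us orth] show thesis
    by (intro that[of "mat_of_cols n us"]) (auto simp: vec_normalize_def)
qed

section \<open>The spectral theorem for Hermitian matrices\<close>

abbreviation real_diag :: "nat \<Rightarrow> (nat \<Rightarrow> real) \<Rightarrow> complex mat" where
  "real_diag n f \<equiv> mat_diag n (\<lambda>k. complex_of_real (f k))"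

lemma mat_diag_index[simp]:
  "i < n \<Longrightarrow> j < n \<Longrightarrow> mat_diag n f $$ (i,j) = (if i = j then f j else 0)"
  "dim_row (mat_diag n f) = n" "dim_col (mat_diag n f) = n"
  by (auto simp: mat_diag_def)

lemma mat_adjoint_real_diag[simp]: "mat_adjoint (real_diag n f) = real_diag n f"
  by (rule eq_matI) auto

lemma mat_adjoint_adjoint[simp]: "mat_adjoint (mat_adjoint (A :: complex mat)) = A"
  by (rule eq_matI) auto

lemma hermitian_conj:
  assumes "hermitian n A" "U \<in> carrier_mat n n"
  shows "hermitian n (U * A * mat_adjoint U)"
proof -
  have U: "U \<in> carrier_mat n n" and A: "A \<in> carrier_mat n n" "mat_adjoint A = A"
    using assms unfolding hermitian_def by auto
  have "mat_adjoint (U * A * mat_adjoint U) = mat_adjoint (mat_adjoint U) * mat_adjoint (U * A)"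
    using U A by (intro mat_adjoint_mult[of _ n n _ n]) auto
  also have "\<dots> = U * (A * mat_adjoint U)"
    using U A by (simp add: mat_adjoint_mult[of U n n A n])
  also have "\<dots> = U * A * mat_adjoint U"
    using U A by (simp add: assoc_mult_mat[of _ n n _ n _ n])
  finally show ?thesis using U A unfolding hermitian_def by simp
qed

lemma hermitian_unitary_diag: "U \<in> carrier_mat n n \<Longrightarrow> hermitian n (U * real_diag n f * mat_adjoint U)"
  by (rule hermitian_conj) (auto simp: hermitian_def)

lemma unitary_conj_first_col:
  assumes W: "unitary n W" and A: "A \<in> carrier_mat n n"
    and eigen: "A *\<^sub>v col W 0 = e \<cdot>\<^sub>v col W 0" and i: "i < n"
  shows "(mat_adjoint W * A * W) $$ (i, 0) = (if i = 0 then e else 0)"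
proof -
  have Wc: "W \<in> carrier_mat n n" and WW: "mat_adjoint W * W = 1\<^sub>m n" using W unfolding unitary_def by auto
  have "(mat_adjoint W * A * W) $$ (i, 0) = row (mat_adjoint W) i \<bullet> (A *\<^sub>v col W 0)"
    using i A Wc by (simp add: assoc_mult_mat[of _ n n _ n _ n] col_mult2[OF A Wc] del: col_mult)
  also have "\<dots> = e * (mat_adjoint W * W) $$ (i, 0)"
    unfolding eigen using i Wc by (simp add: scalar_prod_smult_distrib[of _ n])
  finally show ?thesis using WW i by simp
qed

lemma hermitian_first_col_block:
  assumes B: "hermitian (Suc m) B" and col0: "\<And>i. i < Suc m \<Longrightarrow> B $$ (i, 0) = (if i = 0 then e else 0)"
  defines "B' \<equiv> mat m m (\<lambda>(i,j). B $$ (Suc i, Suc j))"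
  shows "hermitian m B'"
    and "B = four_block_mat (real_diag 1 (\<lambda>_. Re e)) (0\<^sub>m 1 m) (0\<^sub>m m 1) B'"
proof -
  show "hermitian m B'"
    unfolding hermitian_def B'_def by (auto intro!: eq_matI simp: hermitian_index[OF B])
  have e: "e = complex_of_real (Re e)"
    using hermitian_index[OF B, of 0 0] col0[of 0] by (simp add: complex_eq_iff)
  have row0: "B $$ (0, j) = (if j = 0 then e else 0)" if j: "j < Suc m" for j
    using hermitian_index[OF B _ j, of 0] col0[OF j] e by (auto simp: complex_eq_iff)
  show "B = four_block_mat (real_diag 1 (\<lambda>_. Re e)) (0\<^sub>m 1 m) (0\<^sub>m m 1) B'"
  proof (rule eq_matI)
    fix i j assume "i < dim_row (four_block_mat (real_diag 1 (\<lambda>_. Re e)) (0\<^sub>m 1 m) (0\<^sub>m m 1) B')"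
      "j < dim_col (four_block_mat (real_diag 1 (\<lambda>_. Re e)) (0\<^sub>m 1 m) (0\<^sub>m m 1) B')"
    hence ij: "i < Suc m" "j < Suc m" by (auto simp: B'_def)
    show "B $$ (i, j) = four_block_mat (real_diag 1 (\<lambda>_. Re e)) (0\<^sub>m 1 m) (0\<^sub>m m 1) B' $$ (i, j)"
    proof (cases "i = 0 \<or> j = 0")
      case True thus ?thesis using col0 row0 ij e by (auto simp: B'_def)
    next
      case False
      then obtain i' j' where "i = Suc i'" "j = Suc j'" by (metis not0_implies_Suc)
      thus ?thesis using ij by (auto simp: B'_def)
    qed
  qed (use B in \<open>auto simp: B'_def hermitian_def\<close>)
qed

lemma hermitian_deflation:
  assumes A: "hermitian (Suc m) A"
  obtains W e A' where "unitary (Suc m) W" "hermitian m A'"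
    "A = W * four_block_mat (real_diag 1 (\<lambda>_. e)) (0\<^sub>m 1 m) (0\<^sub>m m 1) A' * mat_adjoint W"
proof -
  let ?n = "Suc m"
  have Ac: "A \<in> carrier_mat ?n ?n" using A unfolding hermitian_def by blast
  obtain e where "eigenvalue A e" using spectrum_non_empty[OF Ac] unfolding spectrum_def by auto
  then obtain v where v: "v \<in> carrier_vec ?n" "v \<noteq> 0\<^sub>v ?n" "A *\<^sub>v v = e \<cdot>\<^sub>v v"
    unfolding eigenvalue_def eigenvector_def using Ac by auto
  obtain W c where W: "unitary ?n W" "col W 0 = c \<cdot>\<^sub>v v" using unitary_with_first_col[OF v(1,2)] .
  have Wc: "W \<in> carrier_mat ?n ?n" and WW: "W * mat_adjoint W = 1\<^sub>m ?n"
    using W(1) unfolding unitary_def by auto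
  have "A *\<^sub>v col W 0 = e \<cdot>\<^sub>v col W 0"
    using W(2) mult_mat_vec[OF Ac v(1)] v(3) by (simp add: smult_smult_assoc mult.commute)
  note col0 = unitary_conj_first_col[OF W(1) Ac this]
  define B where "B = mat_adjoint W * A * W"
  have B: "hermitian ?n B"
    using hermitian_conj[OF A mat_adjoint_carrier[OF Wc]] unfolding B_def by simp
  note block = hermitian_first_col_block[OF B col0[folded B_def]]
  have "W * B = (W * mat_adjoint W) * A * W"
    unfolding B_def using Wc Ac by (simp add: assoc_mult_mat[of _ ?n ?n _ ?n _ ?n])
  hence "W * B * mat_adjoint W = A * (W * mat_adjoint W)"
    using WW Wc Ac by (simp add: assoc_mult_mat[of _ ?n ?n _ ?n _ ?n])
  hence "A = W * B * mat_adjoint W" using WW Ac by simp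
  thus thesis using that[OF W(1) block(1)] block(2) by metis
qed

lemma unitary_diag_block:
  assumes U: "unitary m U"
  defines "U' \<equiv> four_block_mat (1\<^sub>m 1) (0\<^sub>m 1 m) (0\<^sub>m m 1) U"
  shows "unitary (Suc m) U'"
    and "four_block_mat (real_diag 1 (\<lambda>_. e)) (0\<^sub>m 1 m) (0\<^sub>m m 1) (U * real_diag m f * mat_adjoint U)
         = U' * real_diag (Suc m) (\<lambda>i. if i = 0 then e else f (i - 1)) * mat_adjoint U'"
proof -
  have Uc: "U \<in> carrier_mat m m" and UU: "mat_adjoint U * U = 1\<^sub>m m"
    using U unfolding unitary_def by auto
  have U'a: "mat_adjoint U' = four_block_mat (1\<^sub>m 1) (0\<^sub>m 1 m) (0\<^sub>m m 1) (mat_adjoint U)"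
    unfolding U'_def by (rule eq_matI) (use Uc in auto)
  have U'c: "U' \<in> carrier_mat (Suc m) (Suc m)" unfolding U'_def using Uc by auto
  have "mat_adjoint U' * U' = 1\<^sub>m (Suc m)"
    unfolding U'a unfolding U'_def
    by (subst mult_four_block_mat[of _ 1 1 _ m _ m _ _ 1 _ m]) (use Uc UU in auto)
  thus "unitary (Suc m) U'"
    using mat_mult_left_right_inverse[OF mat_adjoint_carrier[OF U'c] U'c] U'c unfolding unitary_def by auto
  have D: "real_diag (Suc m) (\<lambda>i. if i = 0 then e else f (i - 1))
      = four_block_mat (real_diag 1 (\<lambda>_. e)) (0\<^sub>m 1 m) (0\<^sub>m m 1) (real_diag m f)"
    by (rule eq_matI) auto
  have "real_diag (Suc m) (\<lambda>i. if i = 0 then e else f (i - 1)) * mat_adjoint U'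
      = four_block_mat (real_diag 1 (\<lambda>_. e)) (0\<^sub>m 1 m) (0\<^sub>m m 1) (real_diag m f * mat_adjoint U)"
    unfolding U'a D by (subst mult_four_block_mat[of _ 1 1 _ m _ m _ _ 1 _ m]) (use Uc in auto)
  moreover have "U' * real_diag (Suc m) (\<lambda>i. if i = 0 then e else f (i - 1)) * mat_adjoint U'
      = U' * (real_diag (Suc m) (\<lambda>i. if i = 0 then e else f (i - 1)) * mat_adjoint U')"
    using U'c by (intro assoc_mult_mat) auto
  ultimately show "four_block_mat (real_diag 1 (\<lambda>_. e)) (0\<^sub>m 1 m) (0\<^sub>m m 1) (U * real_diag m f * mat_adjoint U)
      = U' * real_diag (Suc m) (\<lambda>i. if i = 0 then e else f (i - 1)) * mat_adjoint U'"
    unfolding U'_def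
    by (simp, subst mult_four_block_mat[of _ 1 1 _ m _ m _ _ 1 _ m])
      (use Uc in \<open>auto simp: assoc_mult_mat[of _ m m _ m _ m]\<close>)
qed

theorem hermitian_spectral:
  assumes "hermitian n A"
  shows "\<exists>U f. unitary n U \<and> A = U * real_diag n f * mat_adjoint U"
  using assms
proof (induction n arbitrary: A)
  case 0
  hence "A = 1\<^sub>m 0 * real_diag 0 (\<lambda>_. 0) * mat_adjoint (1\<^sub>m 0)"
    unfolding hermitian_def by (intro eq_matI) auto
  moreover have "mat_adjoint (1\<^sub>m 0 :: complex mat) = 1\<^sub>m 0" by (rule eq_matI) auto
  hence "unitary 0 (1\<^sub>m 0)" by (simp add: unitary_def)
  ultimately show ?case by (intro exI[of _ "1\<^sub>m 0"] exI[of _ "\<lambda>_. 0"] conjI)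
next
  case (Suc m)
  obtain W e A' where W: "unitary (Suc m) W" and A': "hermitian m A'"
    and A: "A = W * four_block_mat (real_diag 1 (\<lambda>_. e)) (0\<^sub>m 1 m) (0\<^sub>m m 1) A' * mat_adjoint W"
    using hermitian_deflation[OF Suc.prems] .
  obtain U f where U: "unitary m U" and A'_eq: "A' = U * real_diag m f * mat_adjoint U"
    using Suc.IH[OF A'] by blast
  define U' where "U' = four_block_mat (1\<^sub>m 1) (0\<^sub>m 1 m) (0\<^sub>m m 1) U"
  define g where "g i = (if i = 0 then e else f (i - 1))" for i
  note U' = unitary_diag_block(1)[OF U, folded U'_def]
    unitary_diag_block(2)[OF U, of e f, folded U'_def g_def]
  have Wc: "W \<in> carrier_mat (Suc m) (Suc m)" and U'c: "U' \<in> carrier_mat (Suc m) (Suc m)"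
    using W U'(1) unfolding unitary_def by auto
  have "A = (W * U') * real_diag (Suc m) g * mat_adjoint (W * U')"
    unfolding A A'_eq U'(2) using Wc U'c
    by (simp add: mat_adjoint_mult[of _ "Suc m" "Suc m" _ "Suc m"] assoc_mult_mat[of _ "Suc m" "Suc m" _ "Suc m" _ "Suc m"])
  thus ?case using unitary_mult[OF W U'(1)] by blast
qed

section \<open>Functions of a Hermitian matrix\<close>

lemma mat_diag_mult_vec:
  "v \<in> carrier_vec n \<Longrightarrow> mat_diag n f *\<^sub>v (v :: complex vec) = vec n (\<lambda>k. f k * v $ k)"
  by (rule eq_vecI) (auto simp: scalar_prod_def mat_diag_def, subst sum.remove, auto)

lemma unitary_diag_mult_vec:
  "U \<in> carrier_mat n n \<Longrightarrow> v \<in> carrier_vec n \<Longrightarrow>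
   (U * real_diag n f * mat_adjoint U) *\<^sub>v v = U *\<^sub>v (real_diag n f *\<^sub>v (mat_adjoint U *\<^sub>v v))"
  using assoc_mult_mat_vec[of "U * real_diag n f" n n "mat_adjoint U" n v]
    assoc_mult_mat_vec[of U n n "real_diag n f" n "mat_adjoint U *\<^sub>v v"]
    mult_mat_vec_carrier[of "mat_adjoint U" n n v] by simp

lemma mult_mat_vec_unit_vec: "(U :: complex mat) \<in> carrier_mat n n \<Longrightarrow> k < n \<Longrightarrow> U *\<^sub>v unit_vec n k = col U k"
  by (rule eq_vecI) (auto simp: scalar_prod_right_unit[of k n])

lemma unitary_diag_mult_col:
  assumes "unitary n U" "k < n"
  shows "(U * real_diag n f * mat_adjoint U) *\<^sub>v col U k = complex_of_real (f k) \<cdot>\<^sub>v col U k"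
proof -
  have U: "U \<in> carrier_mat n n" using assms(1) by (rule unitary_carrier)
  have "(U * real_diag n f * mat_adjoint U) *\<^sub>v col U k = U *\<^sub>v (real_diag n f *\<^sub>v unit_vec n k)"
    using U assms by (simp add: unitary_diag_mult_vec unitary_adjoint_mult_col)
  also have "real_diag n f *\<^sub>v unit_vec n k = complex_of_real (f k) \<cdot>\<^sub>v unit_vec n k"
    using assms(2) by (auto simp: mat_diag_mult_vec intro!: eq_vecI)
  finally show ?thesis using U assms(2) by (simp add: mult_mat_vec[OF U] mult_mat_vec_unit_vec)
qed

lemma unitary_diag_mult:
  assumes "unitary n U"
  shows "(U * real_diag n f * mat_adjoint U) * (U * real_diag n g * mat_adjoint U)
    = U * real_diag n (\<lambda>k. f k * g k) * mat_adjoint U"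
proof -
  have U: "U \<in> carrier_mat n n" "mat_adjoint U * U = 1\<^sub>m n" using assms unfolding unitary_def by auto
  have Ua: "mat_adjoint U \<in> carrier_mat n n" using U by simp
  have cancel: "mat_adjoint U * (U * X) = X" if "X \<in> carrier_mat n n" for X
    using assoc_mult_mat[OF Ua U(1) that] U(2) that by simp
  have "(U * real_diag n f * mat_adjoint U) * (U * real_diag n g * mat_adjoint U)
      = U * (real_diag n f * (mat_adjoint U * (U * (real_diag n g * mat_adjoint U))))"
    using U Ua by (simp add: assoc_mult_mat[of _ n n _ n _ n])
  also have "\<dots> = U * (real_diag n f * real_diag n g) * mat_adjoint U"
    using U Ua cancel[of "real_diag n g * mat_adjoint U"]
    by (simp add: assoc_mult_mat[of _ n n _ n _ n] del: mat_diag_diag)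
  finally show ?thesis by simp
qed

lemma smult_unitary_diag:
  assumes "U \<in> carrier_mat n n"
  shows "complex_of_real c \<cdot>\<^sub>m (U * real_diag n f * mat_adjoint U) = U * real_diag n (\<lambda>k. c * f k) * mat_adjoint U"
proof -
  have "real_diag n (\<lambda>k. c * f k) = complex_of_real c \<cdot>\<^sub>m real_diag n f"
    by (rule eq_matI) auto
  hence "U * real_diag n (\<lambda>k. c * f k) * mat_adjoint U = (complex_of_real c \<cdot>\<^sub>m (U * real_diag n f)) * mat_adjoint U"
    using mult_smult_distrib[OF assms mat_diag_dim] by simp
  also have "\<dots> = complex_of_real c \<cdot>\<^sub>m (U * real_diag n f * mat_adjoint U)"
    using assms by (intro mult_smult_assoc_mat) auto
  finally show ?thesis by simp
qed

lemma index_unitary_diag: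
  assumes "U \<in> carrier_mat n n" "i < n" "j < n"
  shows "(U * real_diag n f * mat_adjoint U) $$ (i,j) = (\<Sum>k<n. U $$ (i,k) * complex_of_real (f k) * cnj (U $$ (j,k)))"
  using assms by (simp add: mat_diag_mult_right[OF assms(1)] index_mult_mat_sum[of _ n n _ n] del: index_mult_mat(1))

lemma unitary_diag_add:
  assumes "U \<in> carrier_mat n n"
  shows "U * real_diag n f * mat_adjoint U + U * real_diag n g * mat_adjoint U
    = U * real_diag n (\<lambda>k. f k + g k) * mat_adjoint U"
proof -
  have "U * real_diag n f * mat_adjoint U + U * real_diag n g * mat_adjoint U
      = (U * real_diag n f + U * real_diag n g) * mat_adjoint U"
    using assms by (intro add_mult_distrib_mat[symmetric, of _ n n]) auto
  also have "U * real_diag n f + U * real_diag n g = U * (real_diag n f + real_diag n g)"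
    using assms by (intro mult_add_distrib_mat[symmetric, of _ n n]) auto
  also have "real_diag n f + real_diag n g = real_diag n (\<lambda>k. f k + g k)" by (rule eq_matI) auto
  finally show ?thesis .
qed

lemma quadratic_form_mat_diag:
  assumes "w \<in> carrier_vec n"
  shows "conjugate w \<bullet> (real_diag n f *\<^sub>v w) = complex_of_real (\<Sum>k<n. f k * (cmod (w $ k))\<^sup>2)"
proof -
  have "conjugate w \<bullet> (real_diag n f *\<^sub>v w) = (\<Sum>k<n. cnj (w $ k) * (complex_of_real (f k) * w $ k))"
    using assms by (auto simp: mat_diag_mult_vec scalar_prod_def lessThan_atLeast0 intro!: sum.cong)
  also have "\<dots> = (\<Sum>k<n. complex_of_real (f k * (cmod (w $ k))\<^sup>2))"
    unfolding of_real_mult complex_norm_square by (simp add: mult_ac)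
  finally show ?thesis by simp
qed

lemma quadratic_form_unitary_diag:
  assumes "U \<in> carrier_mat n n" "v \<in> carrier_vec n"
  shows "conjugate v \<bullet> ((U * real_diag n f * mat_adjoint U) *\<^sub>v v)
    = complex_of_real (\<Sum>k<n. f k * (cmod ((mat_adjoint U *\<^sub>v v) $ k))\<^sup>2)"
proof -
  have w: "mat_adjoint U *\<^sub>v v \<in> carrier_vec n"
    using assms by (intro mult_mat_vec_carrier[of _ n n]) auto
  have "conjugate v \<bullet> (U *\<^sub>v (real_diag n f *\<^sub>v (mat_adjoint U *\<^sub>v v)))
      = conjugate (mat_adjoint U *\<^sub>v v) \<bullet> (real_diag n f *\<^sub>v (mat_adjoint U *\<^sub>v v))"
    using assms w mult_mat_vec_carrier[OF mat_diag_dim w] by (intro scalar_prod_mat_adjoint) auto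
  thus ?thesis using assms by (simp only: unitary_diag_mult_vec quadratic_form_mat_diag[OF w])
qed

lemma psd_unitary_diag:
  assumes "U \<in> carrier_mat n n" "\<And>k. k < n \<Longrightarrow> f k \<ge> 0"
  shows "psd n (U * real_diag n f * mat_adjoint U)"
  using hermitian_unitary_diag[OF assms(1)] assms
  unfolding psd_def hermitian_def
  by (auto simp: quadratic_form_unitary_diag intro!: sum_nonneg)

lemma psd_unitary_diag_nonneg:
  assumes "unitary n U" "psd n (U * real_diag n f * mat_adjoint U)" "k < n"
  shows "f k \<ge> 0"
proof -
  have U: "U \<in> carrier_mat n n" using assms(1) by (rule unitary_carrier)
  have c: "col U k \<in> carrier_vec n" using U by (intro carrier_vecI) simp
  have "0 \<le> Re (conjugate (col U k) \<bullet> ((U * real_diag n f * mat_adjoint U) *\<^sub>v col U k))"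
    using assms(2) c unfolding psd_def by blast
  also have "\<dots> = f k"
    using c unitary_col_norm[OF assms(1,3)]
    by (simp add: unitary_diag_mult_col[OF assms(1,3)] scalar_prod_smult_distrib[of _ n])
  finally show ?thesis .
qed

lemma psd_spectral:
  assumes "psd n P"
  obtains U f where "unitary n U" "\<And>k. k < n \<Longrightarrow> f k \<ge> 0" "P = U * real_diag n f * mat_adjoint U"
  using hermitian_spectral[OF psd_hermitian[OF assms]] psd_unitary_diag_nonneg assms by metis

lemma psd_kernel:
  assumes "psd n P" "v \<in> carrier_vec n" "Re (conjugate v \<bullet> (P *\<^sub>v v)) = 0"
  shows "P *\<^sub>v v = 0\<^sub>v n"
proof -
  obtain U f where U: "unitary n U" and f: "\<And>k. k < n \<Longrightarrow> f k \<ge> 0"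
    and P: "P = U * real_diag n f * mat_adjoint U" using psd_spectral[OF assms(1)] by blast
  have Uc: "U \<in> carrier_mat n n" using U by (rule unitary_carrier)
  define w where "w = mat_adjoint U *\<^sub>v v"
  have w: "w \<in> carrier_vec n" unfolding w_def using Uc assms(2) by (intro mult_mat_vec_carrier[of _ n n]) auto
  have "(\<Sum>k<n. f k * (cmod (w $ k))\<^sup>2) = 0"
    using assms(3) quadratic_form_unitary_diag[OF Uc assms(2), of f] unfolding P w_def by simp
  hence "\<forall>k\<in>{..<n}. f k * (cmod (w $ k))\<^sup>2 = 0"
    by (subst (asm) sum_nonneg_eq_0_iff) (auto intro!: mult_nonneg_nonneg f)
  hence "real_diag n f *\<^sub>v w = 0\<^sub>v n" using w by (auto simp: mat_diag_mult_vec intro!: eq_vecI)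
  thus ?thesis unfolding P using Uc assms(2) by (auto simp: unitary_diag_mult_vec w_def)
qed

lemma square_eq_mult_vec_diff:
  fixes P Q :: "'a :: comm_ring mat"
  assumes P: "P \<in> carrier_mat n n" and Q: "Q \<in> carrier_mat n n" and PQ: "P * P = Q * Q"
    and v: "v \<in> carrier_vec n"
  shows "P *\<^sub>v ((P - Q) *\<^sub>v v) + (P - Q) *\<^sub>v (Q *\<^sub>v v) = 0\<^sub>v n"
proof -
  have Pv: "P *\<^sub>v v \<in> carrier_vec n" "Q *\<^sub>v v \<in> carrier_vec n" using P Q v by auto
  have "(P - Q) *\<^sub>v (Q *\<^sub>v v) = P *\<^sub>v (Q *\<^sub>v v) - Q *\<^sub>v (Q *\<^sub>v v)"
    by (rule minus_mult_distrib_mat_vec[OF P Q Pv(2)])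
  moreover have "P *\<^sub>v (P *\<^sub>v v) = Q *\<^sub>v (Q *\<^sub>v v)"
    using assoc_mult_mat_vec[OF P P v] assoc_mult_mat_vec[OF Q Q v] PQ by simp
  ultimately show ?thesis
    unfolding minus_mult_distrib_mat_vec[OF P Q v] mult_minus_distrib_mat_vec[OF P Pv]
    by (intro eq_vecI) (use P Q Pv in \<open>auto dest: arg_cong[where f = "\<lambda>w. w $ _"]\<close>)
qed

lemma psd_square_eq_diff_eigenvalue:
  assumes P: "psd n P" and Q: "psd n Q" and PQ: "P * P = Q * Q"
    and v: "v \<in> carrier_vec n" "conjugate v \<bullet> v = 1"
    and eigen: "(P - Q) *\<^sub>v v = complex_of_real h \<cdot>\<^sub>v v"
  shows "h = 0"
proof (rule ccontr)
  assume h: "h \<noteq> 0"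
  have Pc: "P \<in> carrier_mat n n" and Qc: "Q \<in> carrier_mat n n" using P Q unfolding psd_def by auto
  have R: "hermitian n (P - Q)" using hermitian_minus[OF psd_hermitian[OF P] psd_hermitian[OF Q]] .
  have Pv: "P *\<^sub>v v \<in> carrier_vec n" "Q *\<^sub>v v \<in> carrier_vec n" using Pc Qc v by auto
  have cv: "conjugate v \<in> carrier_vec n" using v by simp
  have "0 = conjugate v \<bullet> (P *\<^sub>v ((P - Q) *\<^sub>v v) + (P - Q) *\<^sub>v (Q *\<^sub>v v))"
    using cv square_eq_mult_vec_diff[OF Pc Qc PQ v(1)] by simp
  also have "\<dots> = conjugate v \<bullet> (P *\<^sub>v ((P - Q) *\<^sub>v v)) + conjugate v \<bullet> ((P - Q) *\<^sub>v (Q *\<^sub>v v))"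
    by (rule scalar_prod_add_distrib[OF cv]) (use Pc R Pv v in \<open>auto simp: hermitian_def\<close>)
  also have "conjugate v \<bullet> ((P - Q) *\<^sub>v (Q *\<^sub>v v)) = conjugate ((P - Q) *\<^sub>v v) \<bullet> (Q *\<^sub>v v)"
    using R Pv v unfolding hermitian_def by (metis scalar_prod_mat_adjoint)
  finally have "complex_of_real h * (conjugate v \<bullet> (P *\<^sub>v v) + conjugate v \<bullet> (Q *\<^sub>v v)) = 0"
    using cv Pv v Pc by (simp add: eigen mult_mat_vec conjugate_smult_vec algebra_simps)
  hence "conjugate v \<bullet> (P *\<^sub>v v) + conjugate v \<bullet> (Q *\<^sub>v v) = 0" using h by simp
  moreover have "Re (conjugate v \<bullet> (P *\<^sub>v v)) \<ge> 0" "Re (conjugate v \<bullet> (Q *\<^sub>v v)) \<ge> 0"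
    using P Q v unfolding psd_def by auto
  ultimately have "Re (conjugate v \<bullet> (P *\<^sub>v v)) = 0" "Re (conjugate v \<bullet> (Q *\<^sub>v v)) = 0"
    by (auto dest: arg_cong[of _ _ Re])
  hence "(P - Q) *\<^sub>v v = 0\<^sub>v n"
    using psd_kernel[OF P v(1)] psd_kernel[OF Q v(1)] minus_mult_distrib_mat_vec[OF Pc Qc v(1)] by simp
  hence "conjugate v \<bullet> (complex_of_real h \<cdot>\<^sub>v v) = 0" using eigen cv by simp
  thus False using cv v h by simp
qed

lemma psd_sqrt_unique:
  assumes P: "psd n P" and Q: "psd n Q" and PQ: "P * P = Q * Q"
  shows "P = Q"
proof -
  have Pc: "P \<in> carrier_mat n n" and Qc: "Q \<in> carrier_mat n n" using P Q unfolding psd_def by auto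
  obtain V h where V: "unitary n V" and R: "P - Q = V * real_diag n h * mat_adjoint V"
    using hermitian_spectral[OF hermitian_minus[OF psd_hermitian[OF P] psd_hermitian[OF Q]]] by blast
  have Vc: "V \<in> carrier_mat n n" using V by (rule unitary_carrier)
  have "h k = 0" if "k < n" for k
  proof (rule psd_square_eq_diff_eigenvalue[OF P Q PQ])
    show "col V k \<in> carrier_vec n" using Vc by (intro carrier_vecI) simp
  qed (use unitary_col_norm[OF V that] unitary_diag_mult_col[OF V that] R in auto)
  hence "real_diag n h = 0\<^sub>m n n" by (intro eq_matI) auto
  hence "P - Q = 0\<^sub>m n n" unfolding R using Vc by simp
  show ?thesis
  proof (rule eq_matI)
    fix i j assume ij: "i < dim_row Q" "j < dim_col Q"
    hence "(P - Q) $$ (i,j) = 0" using \<open>P - Q = 0\<^sub>m n n\<close> Qc by simp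
    thus "P $$ (i,j) = Q $$ (i,j)" using ij Pc Qc by simp
  qed (use Pc Qc in auto)
qed

lemma mat_abs_unitary_diag:
  assumes U: "unitary n U"
  shows "mat_abs (U * real_diag n f * mat_adjoint U) = U * real_diag n (\<lambda>k. \<bar>f k\<bar>) * mat_adjoint U"
proof -
  have Uc: "U \<in> carrier_mat n n" using U by (rule unitary_carrier)
  let ?A = "U * real_diag n f * mat_adjoint U"
  let ?S = "U * real_diag n (\<lambda>k. \<bar>f k\<bar>) * mat_adjoint U"
  have psdS: "psd n ?S" by (rule psd_unitary_diag[OF Uc]) simp
  have "?S * ?S = U * real_diag n (\<lambda>k. f k * f k) * mat_adjoint U"
    unfolding unitary_diag_mult[OF U] by (simp only: abs_mult_self_eq)
  also have "\<dots> = mat_adjoint ?A * ?A"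
    using hermitian_unitary_diag[OF Uc, of f] unitary_diag_mult[OF U, of f f] unfolding hermitian_def by simp
  finally have SS: "?S * ?S = mat_adjoint ?A * ?A" .
  have dim: "dim_col ?A = n" using Uc by simp
  show ?thesis unfolding mat_abs_def dim
  proof (intro the_equality)
    show "psd n ?S \<and> ?S * ?S = mat_adjoint ?A * ?A" using psdS SS by simp
  next
    fix P assume "psd n P \<and> P * P = mat_adjoint ?A * ?A"
    thus "P = ?S" using psd_sqrt_unique[OF _ psdS] SS by auto
  qed
qed

lemma hermitian_mat_abs:
  assumes "hermitian n A"
  obtains U f where "unitary n U" "A = U * real_diag n f * mat_adjoint U"
    "mat_abs A = U * real_diag n (\<lambda>k. \<bar>f k\<bar>) * mat_adjoint U"
proof -
  obtain U f where U: "unitary n U" and A: "A = U * real_diag n f * mat_adjoint U"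
    using hermitian_spectral[OF assms] by blast
  show thesis using that[OF U A] mat_abs_unitary_diag[OF U] unfolding A by blast
qed

lemma psd_mat_abs:
  assumes "hermitian n A"
  shows "psd n (mat_abs A)"
proof -
  obtain U f where "unitary n U" "mat_abs A = U * real_diag n (\<lambda>k. \<bar>f k\<bar>) * mat_adjoint U"
    using hermitian_mat_abs[OF assms] by blast
  thus ?thesis by (simp add: psd_unitary_diag unitary_carrier)
qed

lemma mat_abs_kernel:
  assumes "hermitian n A" "v \<in> carrier_vec n" "mat_abs A *\<^sub>v v = 0\<^sub>v n"
  shows "A *\<^sub>v v = 0\<^sub>v n"
proof -
  obtain U f where U: "unitary n U" and A: "A = U * real_diag n f * mat_adjoint U"
    and absA: "mat_abs A = U * real_diag n (\<lambda>k. \<bar>f k\<bar>) * mat_adjoint U"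
    using hermitian_mat_abs[OF assms(1)] .
  have Uc: "U \<in> carrier_mat n n" using U by (rule unitary_carrier)
  let ?S = "U * real_diag n (\<lambda>k. sgn (f k)) * mat_adjoint U"
  have "?S * mat_abs A = A"
    unfolding absA unfolding A unitary_diag_mult[OF U] by (simp only: sgn_mult_abs)
  hence "A *\<^sub>v v = (?S * mat_abs A) *\<^sub>v v" by simp
  also have "\<dots> = ?S *\<^sub>v (mat_abs A *\<^sub>v v)"
    unfolding absA using Uc assms(2) by (intro assoc_mult_mat_vec) auto
  finally show ?thesis using assms(3) Uc by auto
qed

lemma mtrace_mult_comm:
  assumes A: "A \<in> carrier_mat n m" and B: "B \<in> carrier_mat m n"
  shows "mtrace (A * B) = mtrace (B * A)"
proof -
  have "mtrace (A * B) = (\<Sum>i<n. \<Sum>l<m. A $$ (i,l) * B $$ (l,i))"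
    unfolding mtrace_def using A B
    by (auto intro!: sum.cong simp: index_mult_mat_sum[of _ n m _ n] simp del: index_mult_mat(1))
  also have "\<dots> = (\<Sum>l<m. \<Sum>i<n. B $$ (l,i) * A $$ (i,l))" by (subst sum.swap) (simp add: mult.commute)
  also have "\<dots> = mtrace (B * A)"
    unfolding mtrace_def using A B
    by (auto intro!: sum.cong simp: index_mult_mat_sum[of _ m n _ m] simp del: index_mult_mat(1))
  finally show ?thesis .
qed

lemma mtrace_unitary_diag:
  assumes U: "unitary n U"
  shows "mtrace (U * real_diag n f * mat_adjoint U) = complex_of_real (\<Sum>k<n. f k)"
proof -
  have Uc: "U \<in> carrier_mat n n" and UU: "mat_adjoint U * U = 1\<^sub>m n" using U unfolding unitary_def by auto
  have "mtrace (U * real_diag n f * mat_adjoint U) = mtrace (mat_adjoint U * (U * real_diag n f))"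
    using Uc by (intro mtrace_mult_comm) auto
  also have "\<dots> = mtrace (real_diag n f)"
    using Uc UU by (simp add: assoc_mult_mat[of _ n n _ n _ n, symmetric])
  finally show ?thesis by (simp add: mtrace_def)
qed

lemma trace_norm_unitary_diag:
  "unitary n U \<Longrightarrow> trace_norm (U * real_diag n f * mat_adjoint U) = (\<Sum>k<n. \<bar>f k\<bar>)"
  unfolding trace_norm_def by (simp add: mat_abs_unitary_diag mtrace_unitary_diag)

lemma trace_norm_hermitian_nonneg: "hermitian n A \<Longrightarrow> trace_norm A \<ge> 0"
  by (rule hermitian_mat_abs) (auto simp: trace_norm_unitary_diag intro: sum_nonneg)

lemma trace_norm_smult_hermitian:
  assumes "hermitian n A"
  shows "trace_norm (complex_of_real c \<cdot>\<^sub>m A) = \<bar>c\<bar> * trace_norm A"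
proof -
  obtain U f where U: "unitary n U" and A: "A = U * real_diag n f * mat_adjoint U"
    using hermitian_spectral[OF assms] by blast
  show ?thesis unfolding A smult_unitary_diag[OF unitary_carrier[OF U]] trace_norm_unitary_diag[OF U]
    by (simp add: abs_mult sum_distrib_left)
qed

lemma sum_quadratic_form_cols:
  assumes V: "unitary n V" and A: "A \<in> carrier_mat n n"
  shows "(\<Sum>k<n. conjugate (col V k) \<bullet> (A *\<^sub>v col V k)) = mtrace A"
proof -
  have Vc: "V \<in> carrier_mat n n" and VV: "V * mat_adjoint V = 1\<^sub>m n" using V unfolding unitary_def by auto
  have "(\<Sum>k<n. conjugate (col V k) \<bullet> (A *\<^sub>v col V k)) = mtrace (mat_adjoint V * (A * V))"
    unfolding mtrace_def using Vc A by (auto simp: row_mat_adjoint col_mult2 simp del: col_mult intro!: sum.cong)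
  also have "\<dots> = mtrace (A * V * mat_adjoint V)" using Vc A by (intro mtrace_mult_comm) auto
  also have "A * V * mat_adjoint V = A" using Vc A VV by (simp add: assoc_mult_mat[of _ n n _ n _ n])
  finally show ?thesis .
qed

lemma trace_norm_diff_density_le:
  assumes Y1: "density n Y1" and Y2: "density n Y2"
  shows "trace_norm (Y1 - Y2) \<le> 2"
proof -
  have p1: "psd n Y1" "mtrace Y1 = 1" and p2: "psd n Y2" "mtrace Y2 = 1"
    using Y1 Y2 unfolding density_def by auto
  have c1: "Y1 \<in> carrier_mat n n" and c2: "Y2 \<in> carrier_mat n n" using p1 p2 unfolding psd_def by auto
  obtain V h where V: "unitary n V" and Y: "Y1 - Y2 = V * real_diag n h * mat_adjoint V"
    using hermitian_spectral[OF hermitian_minus[OF psd_hermitian[OF p1(1)] psd_hermitian[OF p2(1)]]] by blast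
  have Vc: "V \<in> carrier_mat n n" using V by (rule unitary_carrier)
  have cc: "k < n \<Longrightarrow> col V k \<in> carrier_vec n" for k using Vc by (intro carrier_vecI) simp
  define q1 where "q1 k = Re (conjugate (col V k) \<bullet> (Y1 *\<^sub>v col V k))" for k
  define q2 where "q2 k = Re (conjugate (col V k) \<bullet> (Y2 *\<^sub>v col V k))" for k
  have h: "h k = q1 k - q2 k" if k: "k < n" for k
  proof -
    have "complex_of_real (h k) = conjugate (col V k) \<bullet> ((Y1 - Y2) *\<^sub>v col V k)"
      using cc[OF k] unitary_col_norm[OF V k] by (simp add: Y unitary_diag_mult_col[OF V k])
    also have "\<dots> = conjugate (col V k) \<bullet> (Y1 *\<^sub>v col V k) - conjugate (col V k) \<bullet> (Y2 *\<^sub>v col V k)"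
      using c1 c2 cc[OF k] by (simp add: minus_mult_distrib_mat_vec scalar_prod_minus_distrib[of _ n])
    finally show ?thesis unfolding q1_def q2_def by (metis Re_complex_of_real minus_complex.simps(1))
  qed
  have q: "q1 k \<ge> 0" "q2 k \<ge> 0" if "k < n" for k
    using p1 p2 cc[OF that] unfolding psd_def q1_def q2_def by auto
  have "(\<Sum>k<n. q1 k) = 1" "(\<Sum>k<n. q2 k) = 1"
    unfolding q1_def q2_def using p1 p2 sum_quadratic_form_cols[OF V c1] sum_quadratic_form_cols[OF V c2]
    by (simp_all flip: Re_sum)
  moreover have "trace_norm (Y1 - Y2) \<le> (\<Sum>k<n. q1 k + q2 k)"
    unfolding Y trace_norm_unitary_diag[OF V] by (rule sum_mono) (use h q in fastforce)
  ultimately show ?thesis by (simp add: sum.distrib)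
qed

section \<open>Rank and support projection\<close>

lemma rank_sum_outer_le:
  assumes "finite K"
  shows "vec_space.rank n (mat n n (\<lambda>(i,j). \<Sum>k\<in>K. a i k * b j k)) \<le> card K"
  using assms
proof (induction K rule: finite_induct)
  case empty
  have "mat n n (\<lambda>(i,j). \<Sum>k\<in>{}. a i k * b j k) = 0\<^sub>m n n" by (rule eq_matI) auto
  thus ?case by (simp only: vec_space.rank_0I card.empty order_refl)
next
  case (insert k K)
  define R where "R = mat n n (\<lambda>(i,j). a i k * b j k)"
  have "mat n n (\<lambda>(i,j). \<Sum>k\<in>insert k K. a i k * b j k) = mat n n (\<lambda>(i,j). \<Sum>k\<in>K. a i k * b j k) + R"
    unfolding R_def by (rule eq_matI) (use insert in auto)
  moreover have "vec_space.rank n R \<le> 1"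
    by (rule vec_space.rank_le_1_product_entries[of R n n "\<lambda>i. a i k" "\<lambda>j. b j k"]) (auto simp: R_def)
  ultimately show ?case
    using vec_space.rank_subadditive[of "mat n n (\<lambda>(i,j). \<Sum>k\<in>K. a i k * b j k)" n n R] insert
    by (simp add: R_def)
qed

lemma rank_unitary_diag_le:
  assumes "U \<in> carrier_mat n n"
  shows "vec_space.rank n (U * real_diag n f * mat_adjoint U) \<le> card {k. k < n \<and> f k \<noteq> 0}"
proof -
  let ?K = "{k. k < n \<and> f k \<noteq> 0}"
  have "U * real_diag n f * mat_adjoint U
      = mat n n (\<lambda>(i,j). \<Sum>k\<in>?K. (U $$ (i,k) * complex_of_real (f k)) * cnj (U $$ (j,k)))"
  proof (rule eq_matI)
    fix i j assume "i < dim_row (mat n n (\<lambda>(i,j). \<Sum>k\<in>?K. (U $$ (i,k) * complex_of_real (f k)) * cnj (U $$ (j,k))))"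
      "j < dim_col (mat n n (\<lambda>(i,j). \<Sum>k\<in>?K. (U $$ (i,k) * complex_of_real (f k)) * cnj (U $$ (j,k))))"
    hence ij: "i < n" "j < n" by auto
    have "{..<n} = ?K \<union> {k. k < n \<and> f k = 0}" by auto
    thus "(U * real_diag n f * mat_adjoint U) $$ (i,j)
        = mat n n (\<lambda>(i,j). \<Sum>k\<in>?K. (U $$ (i,k) * complex_of_real (f k)) * cnj (U $$ (j,k))) $$ (i,j)"
      unfolding index_unitary_diag[OF assms ij] using ij
      by (simp add: sum.union_disjoint disjoint_iff)
  qed (use assms in auto)
  thus ?thesis by (simp add: rank_sum_outer_le)
qed

lemma det_unitary_diag:
  assumes "unitary n V"
  shows "det (V * real_diag n f * mat_adjoint V) = (\<Prod>i<n. complex_of_real (f i))"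
proof -
  have Vc: "V \<in> carrier_mat n n" and VV: "V * mat_adjoint V = 1\<^sub>m n" using assms unfolding unitary_def by auto
  have "det (V * real_diag n f * mat_adjoint V) = det (real_diag n f) * det (V * mat_adjoint V)"
    using Vc by (simp add: det_mult[of _ n])
  thus ?thesis using VV
    by (subst (asm) det_upper_triangular[of _ n]) (auto simp: upper_triangular_def prod_list_diag_prod atLeast0LessThan)
qed

text \<open>Adding the spectral projection onto the kernel makes the matrix invertible, and that
  projection has rank at most the dimension of the kernel.\<close>
lemma rank_unitary_diag_ge:
  assumes V: "unitary n V"
  shows "card {k. k < n \<and> e k \<noteq> 0} \<le> vec_space.rank n (V * real_diag n e * mat_adjoint V)"
proof -
  have Vc: "V \<in> carrier_mat n n" using V by (rule unitary_carrier)
  define M where "M = V * real_diag n e * mat_adjoint V"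
  define \<chi> where "\<chi> k = (if e k = 0 then 1 else 0 :: real)" for k
  define G where "G = V * real_diag n \<chi> * mat_adjoint V"
  have Mc: "M \<in> carrier_mat n n" and Gc: "G \<in> carrier_mat n n" unfolding M_def G_def using Vc by auto
  have "det (M + G) = (\<Prod>i<n. complex_of_real (e i + \<chi> i))"
    unfolding M_def G_def unitary_diag_add[OF Vc] det_unitary_diag[OF V] ..
  also have "\<dots> \<noteq> 0" by (simp add: \<chi>_def)
  finally have "n = vec_space.rank n (M + G)" using vec_space.det_rank_iff[of "M + G" n] Mc Gc by simp
  also have "\<dots> \<le> vec_space.rank n M + vec_space.rank n G" by (rule vec_space.rank_subadditive[OF Mc Gc])
  also have "vec_space.rank n G \<le> card {k. k < n \<and> e k = 0}"
  proof -
    have "{k. k < n \<and> \<chi> k \<noteq> 0} = {k. k < n \<and> e k = 0}" by (auto simp: \<chi>_def)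
    thus ?thesis using rank_unitary_diag_le[OF Vc, of \<chi>] unfolding G_def by simp
  qed
  finally have "n \<le> vec_space.rank n M + card {k. k < n \<and> e k = 0}" by simp
  moreover have "card {k. k < n \<and> e k \<noteq> 0} + card {k. k < n \<and> e k = 0} = n"
  proof -
    have "{k. k < n \<and> e k \<noteq> 0} \<union> {k. k < n \<and> e k = 0} = {..<n}"
      "{k. k < n \<and> e k \<noteq> 0} \<inter> {k. k < n \<and> e k = 0} = {}" by auto
    thus ?thesis by (metis card_Un_disjoint card_lessThan finite_Un finite_lessThan)
  qed
  ultimately show ?thesis unfolding M_def by linarith
qed

lemma support_projection:
  assumes "hermitian n M"
  obtains P where "hermitian n P" "P * P = P" "M * P = M" "Re (mtrace P) \<le> real (vec_space.rank n M)"
proof -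
  obtain V e where V: "unitary n V" and M: "M = V * real_diag n e * mat_adjoint V"
    using hermitian_spectral[OF assms] by blast
  define F where "F k = (if e k = 0 then 0 else 1 :: real)" for k
  define P where "P = V * real_diag n F * mat_adjoint V"
  have FF: "F k * F k = F k" "e k * F k = e k" for k by (auto simp: F_def)
  have "P * P = P" unfolding P_def unitary_diag_mult[OF V] FF ..
  moreover have "M * P = M" unfolding M P_def unitary_diag_mult[OF V] FF ..
  moreover have "(\<Sum>k<n. F k) = real (card {k. k < n \<and> e k \<noteq> 0})"
    unfolding F_def by (simp add: sum.If_cases lessThan_def Collect_conj_eq Compl_eq)
  hence "Re (mtrace P) \<le> real (vec_space.rank n M)"
    unfolding P_def mtrace_unitary_diag[OF V] M using rank_unitary_diag_ge[OF V, of e] by simp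
  ultimately show thesis using that hermitian_unitary_diag[OF unitary_carrier[OF V]] unfolding P_def by blast
qed

section \<open>Linear maps, Choi operators and \<open>S \<otimes> id\<close>\<close>

lemma mult_add_less_mult:
  assumes "a < m" "(x::nat) < d"
  shows "a * d + x < m * d"
proof -
  have "a * d + x < Suc a * d" using assms(2) by simp
  also have "\<dots> \<le> m * d" using assms(1) by (intro mult_le_mono1) simp
  finally show ?thesis .
qed

lemma mod_less_of_less_mult: "(r::nat) < m * d \<Longrightarrow> r mod d < d"
  by (metis mod_less_divisor mult_0_right not_less_zero gr0I)

lemma sum_lessThan_mult:
  fixes f :: "nat \<Rightarrow> 'a::comm_monoid_add"
  shows "(\<Sum>r<m * k. f r) = (\<Sum>b<m. \<Sum>c<k. f (b * k + c))"
proof -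
  have "(\<Sum>r<m * k. f r) = (\<Sum>b<m. sum f {b * k..<b * k + k})"
    using sum.nat_group[where g = f and k = k and n = m] by simp
  also have "\<dots> = (\<Sum>b<m. \<Sum>c<k. f (b * k + c))"
  proof (rule sum.cong[OF refl])
    fix b
    have "{b * k..<b * k + k} = (\<lambda>c. b * k + c) ` {..<k}"
    proof (auto simp: image_def)
      fix x assume "b * k \<le> x" "x < b * k + k"
      thus "\<exists>c\<in>{..<k}. x = b * k + c" by (intro bexI[of _ "x - b * k"]) auto
    qed
    thus "sum f {b * k..<b * k + k} = (\<Sum>c<k. f (b * k + c))" by (simp add: sum.reindex)
  qed
  finally show ?thesis .
qed

lemma sum_lessThan_mult_block:
  fixes h :: "nat \<Rightarrow> 'a::comm_monoid_add"
  assumes "b < m"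
  shows "(\<Sum>u<m * d. if u div d = b then h u else 0) = (\<Sum>j<d. h (b * d + j))"
proof -
  have "(\<Sum>u<m * d. if u div d = b then h u else 0)
      = (\<Sum>b'<m. \<Sum>j<d. if (b' * d + j) div d = b then h (b' * d + j) else 0)"
    by (rule sum_lessThan_mult)
  also have "\<dots> = (\<Sum>b'<m. if b' = b then (\<Sum>j<d. h (b * d + j)) else 0)"
  proof (rule sum.cong[OF refl])
    fix b'
    show "(\<Sum>j<d. if (b' * d + j) div d = b then h (b' * d + j) else 0)
        = (if b' = b then (\<Sum>j<d. h (b * d + j)) else 0)"
      by (auto intro!: sum.cong sum.neutral)
  qed
  finally show ?thesis using assms by simp
qed

definition elem_mat :: "nat \<Rightarrow> nat \<Rightarrow> nat \<Rightarrow> complex mat" where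
  "elem_mat d a b = mat d d (\<lambda>(x,y). if x = a \<and> y = b then 1 else 0)"

lemma elem_mat_carrier[simp]: "elem_mat d a b \<in> carrier_mat d d"
  by (simp add: elem_mat_def)

lemma lin_map_carrier: "lin_map d dB S \<Longrightarrow> X \<in> carrier_mat d d \<Longrightarrow> S X \<in> carrier_mat dB dB"
  unfolding lin_map_def by blast

lemma lin_map_expand:
  assumes S: "lin_map d dB S" and X: "X \<in> carrier_mat d d" and ij: "i < dB" "j < dB"
  shows "S X $$ (i,j) = (\<Sum>a<d. \<Sum>b<d. X $$ (a,b) * S (elem_mat d a b) $$ (i,j))"
proof -
  have add: "\<And>Y Z. Y \<in> carrier_mat d d \<Longrightarrow> Z \<in> carrier_mat d d \<Longrightarrow> S (Y + Z) = S Y + S Z"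
    and smult: "\<And>Y c. Y \<in> carrier_mat d d \<Longrightarrow> S (c \<cdot>\<^sub>m Y) = c \<cdot>\<^sub>m S Y"
    using S unfolding lin_map_def by auto
  define XK where "XK K = mat d d (\<lambda>(a,b). if (a,b) \<in> K then X $$ (a,b) else 0)" for K
  have XK: "XK K \<in> carrier_mat d d" for K unfolding XK_def by simp
  have partial: "S (XK K) $$ (i,j) = (\<Sum>p\<in>K. X $$ p * S (elem_mat d (fst p) (snd p)) $$ (i,j))"
    if "finite K" "K \<subseteq> {..<d} \<times> {..<d}" for K
    using that
  proof (induction K rule: finite_induct)
    case empty
    have "XK {} = 0 \<cdot>\<^sub>m X" unfolding XK_def by (rule eq_matI) (use X in auto)
    thus ?case using smult[OF X] lin_map_carrier[OF S X] ij by simp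
  next
    case (insert p K)
    obtain a b where p: "p = (a,b)" by (cases p)
    have "XK (insert p K) = XK K + X $$ (a,b) \<cdot>\<^sub>m elem_mat d a b"
      unfolding XK_def elem_mat_def by (rule eq_matI) (use insert p in auto)
    hence "S (XK (insert p K)) = S (XK K) + X $$ (a,b) \<cdot>\<^sub>m S (elem_mat d a b)"
      using add[OF XK smult_carrier_mat[OF elem_mat_carrier]] smult[OF elem_mat_carrier] by simp
    thus ?case
      using insert p ij lin_map_carrier[OF S elem_mat_carrier, of a b] lin_map_carrier[OF S XK, of K] by simp
  qed
  have "XK ({..<d} \<times> {..<d}) = X" unfolding XK_def by (rule eq_matI) (use X in auto)
  thus ?thesis using partial[of "{..<d} \<times> {..<d}"] by (simp add: sum.cartesian_product split_def)
qed

lemma lin_map_diff: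
  assumes "lin_map d dB P1" "lin_map d dB P2"
  shows "lin_map d dB (\<lambda>X. P1 X - P2 X)"
proof -
  have c: "P1 X \<in> carrier_mat dB dB" "P2 X \<in> carrier_mat dB dB" if "X \<in> carrier_mat d d" for X
    using assms that by (auto intro: lin_map_carrier)
  show ?thesis unfolding lin_map_def
  proof (intro conjI ballI allI)
    fix X :: "complex mat" assume "X \<in> carrier_mat d d"
    thus "P1 X - P2 X \<in> carrier_mat dB dB" using c by (simp add: minus_carrier_mat)
  next
    fix X Y :: "complex mat" assume X: "X \<in> carrier_mat d d" and Y: "Y \<in> carrier_mat d d"
    have "P1 (X + Y) = P1 X + P1 Y" "P2 (X + Y) = P2 X + P2 Y" using assms X Y unfolding lin_map_def by auto
    thus "P1 (X + Y) - P2 (X + Y) = (P1 X - P2 X) + (P1 Y - P2 Y)"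
      using c[OF X] c[OF Y] by (auto intro!: eq_matI)
  next
    fix X :: "complex mat" and a assume X: "X \<in> carrier_mat d d"
    have "P1 (a \<cdot>\<^sub>m X) = a \<cdot>\<^sub>m P1 X" "P2 (a \<cdot>\<^sub>m X) = a \<cdot>\<^sub>m P2 X" using assms X unfolding lin_map_def by auto
    thus "P1 (a \<cdot>\<^sub>m X) - P2 (a \<cdot>\<^sub>m X) = a \<cdot>\<^sub>m (P1 X - P2 X)"
      using c[OF X] by (auto intro!: eq_matI simp: right_diff_distrib)
  qed
qed

lemma index_choi:
  "r < dB * d \<Longrightarrow> s < dB * d \<Longrightarrow>
   choi d dB S $$ (r,s) = S (elem_mat d (r mod d) (s mod d)) $$ (r div d, s div d)"
  by (simp add: choi_def elem_mat_def)

lemma index_tensor_id: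
  "r < dB * k \<Longrightarrow> s < dB * k \<Longrightarrow>
   tensor_id d dB k S X $$ (r,s) = S (mat d d (\<lambda>(a, b). X $$ (a * k + r mod k, b * k + s mod k))) $$ (r div k, s div k)"
  by (simp add: tensor_id_def)

lemma tensor_id_choi:
  assumes S: "lin_map d dB S" and rs: "r < dB * d" "s < dB * d"
  shows "tensor_id d dB d S X $$ (r,s) = (\<Sum>a<d. \<Sum>b<d.
     X $$ (a * d + r mod d, b * d + s mod d) * choi d dB S $$ (r div d * d + a, s div d * d + b))"
proof -
  have i: "r div d < dB" and j: "s div d < dB" using rs less_mult_imp_div_less by auto
  have "tensor_id d dB d S X $$ (r,s) = (\<Sum>a<d. \<Sum>b<d.
     X $$ (a * d + r mod d, b * d + s mod d) * S (elem_mat d a b) $$ (r div d, s div d))"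
    unfolding index_tensor_id[OF rs] by (subst lin_map_expand[OF S _ i j]) auto
  also have "\<dots> = (\<Sum>a<d. \<Sum>b<d.
     X $$ (a * d + r mod d, b * d + s mod d) * choi d dB S $$ (r div d * d + a, s div d * d + b))"
    using i j by (intro sum.cong refl) (simp add: index_choi mult_add_less_mult)
  finally show ?thesis .
qed

lemma tensor_id_smult:
  assumes "lin_map d dB S" "X \<in> carrier_mat (d * k) (d * k)"
  shows "tensor_id d dB k S (c \<cdot>\<^sub>m X) = c \<cdot>\<^sub>m tensor_id d dB k S X"
proof (rule eq_matI)
  fix r s assume "r < dim_row (c \<cdot>\<^sub>m tensor_id d dB k S X)" "s < dim_col (c \<cdot>\<^sub>m tensor_id d dB k S X)"
  hence rs: "r < dB * k" "s < dB * k" by (auto simp: tensor_id_def)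
  define B where "B = mat d d (\<lambda>(a, b). X $$ (a * k + r mod k, b * k + s mod k))"
  have "mat d d (\<lambda>(a, b). (c \<cdot>\<^sub>m X) $$ (a * k + r mod k, b * k + s mod k)) = c \<cdot>\<^sub>m B"
    unfolding B_def using assms(2) mod_less_of_less_mult[OF rs(1)] mod_less_of_less_mult[OF rs(2)]
    by (intro eq_matI) (auto simp: mult_add_less_mult)
  moreover have "S B \<in> carrier_mat dB dB" unfolding B_def by (rule lin_map_carrier[OF assms(1)]) simp
  moreover have "S (c \<cdot>\<^sub>m B) = c \<cdot>\<^sub>m S B" using assms(1) unfolding lin_map_def B_def by simp
  ultimately show "tensor_id d dB k S (c \<cdot>\<^sub>m X) $$ (r, s) = (c \<cdot>\<^sub>m tensor_id d dB k S X) $$ (r, s)"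
    using rs less_mult_imp_div_less[OF rs(1)] less_mult_imp_div_less[OF rs(2)]
    by (simp add: index_tensor_id B_def[symmetric] tensor_id_def)
qed (simp_all add: tensor_id_def)

lemma choi_diff:
  assumes "lin_map d dB P1" "lin_map d dB P2"
  shows "choi d dB (\<lambda>X. P1 X - P2 X) = choi d dB P1 - choi d dB P2"
proof -
  have "dim_row (P2 Z) = dB \<and> dim_col (P2 Z) = dB" if "Z \<in> carrier_mat d d" for Z
    using lin_map_carrier[OF assms(2) that] by auto
  thus ?thesis by (intro eq_matI) (auto simp: choi_def less_mult_imp_div_less)
qed

lemma tensor_id_diff:
  assumes "lin_map d dB P1" "lin_map d dB P2"
  shows "tensor_id d dB k (\<lambda>X. P1 X - P2 X) Y = tensor_id d dB k P1 Y - tensor_id d dB k P2 Y"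
proof -
  have "dim_row (P2 Z) = dB \<and> dim_col (P2 Z) = dB" if "Z \<in> carrier_mat d d" for Z
    using lin_map_carrier[OF assms(2) that] by auto
  thus ?thesis by (intro eq_matI) (auto simp: tensor_id_def less_mult_imp_div_less)
qed

definition outer :: "nat \<Rightarrow> (nat \<Rightarrow> complex) \<Rightarrow> complex mat" where
  "outer N a = mat N N (\<lambda>(r,s). a r * cnj (a s))"

lemma psd_outer: "psd N (outer N a)"
proof -
  have c: "outer N a \<in> carrier_mat N N" by (simp add: outer_def)
  have "0 \<le> Re (conjugate v \<bullet> (outer N a *\<^sub>v v))" if v: "v \<in> carrier_vec N" for v
  proof -
    define z where "z = (\<Sum>j<N. cnj (a j) * v $ j)"
    have "conjugate v \<bullet> (outer N a *\<^sub>v v) = (\<Sum>i<N. cnj (v $ i) * a i * z)"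
      unfolding quadratic_form_sum[OF c v] z_def
      by (intro sum.cong refl) (auto simp: outer_def sum_distrib_left mult_ac intro!: sum.cong)
    also have "\<dots> = cnj z * z" unfolding z_def by (simp add: sum_distrib_right cnj_sum mult_ac)
    finally show ?thesis by (simp add: complex_mult_cnj)
  qed
  moreover have "mat_adjoint (outer N a) = outer N a" by (rule eq_matI) (auto simp: outer_def)
  ultimately show ?thesis unfolding psd_def using c by blast
qed

lemma mtrace_outer: "mtrace (outer N a) = complex_of_real (\<Sum>q<N. (cmod (a q))\<^sup>2)"
  unfolding mtrace_def outer_def of_real_sum complex_norm_square by simp

lemma outer_smult: "outer N (\<lambda>q. c * a q) = (c * cnj c) \<cdot>\<^sub>m outer N a"
  by (rule eq_matI) (auto simp: outer_def)

lemma choi_eq_tensor_id_max_entangled: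
  "choi d dB S = tensor_id d dB d S (outer (d * d) (\<lambda>q. if q div d = q mod d then 1 else 0))"
proof (rule eq_matI)
  let ?\<Omega> = "outer (d * d) (\<lambda>q. if q div d = q mod d then 1 else 0)"
  fix r s assume "r < dim_row (tensor_id d dB d S ?\<Omega>)" "s < dim_col (tensor_id d dB d S ?\<Omega>)"
  hence rs: "r < dB * d" "s < dB * d" by (auto simp: tensor_id_def)
  have "mat d d (\<lambda>(a, b). ?\<Omega> $$ (a * d + r mod d, b * d + s mod d)) = elem_mat d (r mod d) (s mod d)"
    using mod_less_of_less_mult[OF rs(1)] mod_less_of_less_mult[OF rs(2)]
    by (intro eq_matI) (auto simp: outer_def elem_mat_def mult_add_less_mult)
  thus "choi d dB S $$ (r,s) = tensor_id d dB d S ?\<Omega> $$ (r,s)"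
    by (simp add: index_choi[OF rs] index_tensor_id[OF rs])
qed (auto simp: choi_def tensor_id_def)

lemma psd_choi: "quantum_channel d dB S \<Longrightarrow> psd (dB * d) (choi d dB S)"
  unfolding quantum_channel_def choi_eq_tensor_id_max_entangled using psd_outer by blast

lemma mtrace_tensor_id:
  assumes S: "quantum_channel d dB S" and X: "X \<in> carrier_mat (d * k) (d * k)"
  shows "mtrace (tensor_id d dB k S X) = mtrace X"
proof -
  have L: "lin_map d dB S" and tr: "\<And>Y. Y \<in> carrier_mat d d \<Longrightarrow> mtrace (S Y) = mtrace Y"
    using S unfolding quantum_channel_def by auto
  define B where "B c = mat d d (\<lambda>(a,b). X $$ (a * k + c, b * k + c))" for c
  have B: "B c \<in> carrier_mat d d" for c unfolding B_def by simp
  have "mtrace (tensor_id d dB k S X) = (\<Sum>b<dB. \<Sum>c<k. S (B c) $$ (b, b))"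
    unfolding mtrace_def tensor_id_def B_def by (simp add: sum_lessThan_mult)
  also have "\<dots> = (\<Sum>c<k. mtrace (S (B c)))"
  proof -
    have "dim_row (S (B c)) = dB" for c using lin_map_carrier[OF L B] by auto
    thus ?thesis by (subst sum.swap) (simp add: mtrace_def)
  qed
  also have "\<dots> = (\<Sum>c<k. mtrace (B c))" using tr[OF B] by simp
  also have "\<dots> = (\<Sum>a<d. \<Sum>c<k. X $$ (a * k + c, a * k + c))"
    unfolding mtrace_def B_def by (simp add: sum.swap[of _ "{..<k}"])
  also have "\<dots> = mtrace X" unfolding mtrace_def using X by (simp add: sum_lessThan_mult)
  finally show ?thesis .
qed

section \<open>The diamond norm of a difference of channels\<close>

lemma hermitian_tensor_id_diff:
  assumes "quantum_channel d dB P1" "quantum_channel d dB P2" "psd (d * k) X"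
  shows "hermitian (dB * k) (tensor_id d dB k (\<lambda>X. P1 X - P2 X) X)"
  using assms unfolding tensor_id_diff[OF assms(1,2)[unfolded quantum_channel_def, THEN conjunct1]]
  by (intro hermitian_minus psd_hermitian) (auto simp: quantum_channel_def)

lemma density_tensor_id:
  assumes S: "quantum_channel d dB S" and \<rho>: "density (d * k) \<rho>"
  shows "density (dB * k) (tensor_id d dB k S \<rho>)"
proof -
  have "\<rho> \<in> carrier_mat (d * k) (d * k)" using \<rho> unfolding density_def psd_def by blast
  thus ?thesis using S \<rho> mtrace_tensor_id[OF S] unfolding density_def quantum_channel_def by simp
qed

lemma trace_norm_tensor_id_diff_le:
  assumes Q1: "quantum_channel d dB P1" and Q2: "quantum_channel d dB P2" and \<rho>: "density (d * k) \<rho>"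
  shows "trace_norm (tensor_id d dB k (\<lambda>X. P1 X - P2 X) \<rho>) \<le> 2"
proof -
  have L: "lin_map d dB P1" "lin_map d dB P2" using Q1 Q2 unfolding quantum_channel_def by auto
  show ?thesis unfolding tensor_id_diff[OF L]
    by (rule trace_norm_diff_density_le[OF density_tensor_id[OF Q1 \<rho>] density_tensor_id[OF Q2 \<rho>]])
qed

lemma trace_norm_le_diamond_norm:
  assumes "quantum_channel d dB P1" "quantum_channel d dB P2" "density (d * k) \<rho>"
  shows "trace_norm (tensor_id d dB k (\<lambda>X. P1 X - P2 X) \<rho>) \<le> diamond_norm d dB (\<lambda>X. P1 X - P2 X)"
  unfolding diamond_norm_def
  by (rule cSup_upper) (use assms trace_norm_tensor_id_diff_le[OF assms(1,2)] in \<open>auto simp: bdd_above_def\<close>)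

lemma diamond_norm_nonneg:
  assumes "d > 0" "quantum_channel d dB P1" "quantum_channel d dB P2"
  shows "0 \<le> diamond_norm d dB (\<lambda>X. P1 X - P2 X)"
proof -
  have "mtrace (outer (d * 1) (\<lambda>q. if q = 0 then 1 else 0)) = 1"
    using assms(1) by (simp add: mtrace_outer if_distrib[of "\<lambda>z. (cmod z)\<^sup>2"] cong: if_cong)
  hence \<rho>: "density (d * 1) (outer (d * 1) (\<lambda>q. if q = 0 then 1 else 0))"
    unfolding density_def using psd_outer by blast
  have "0 \<le> trace_norm (tensor_id d dB 1 (\<lambda>X. P1 X - P2 X) (outer (d * 1) (\<lambda>q. if q = 0 then 1 else 0)))"
    by (rule trace_norm_hermitian_nonneg[OF hermitian_tensor_id_diff[OF assms(2,3) psd_outer]])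
  also have "\<dots> \<le> diamond_norm d dB (\<lambda>X. P1 X - P2 X)" by (rule trace_norm_le_diamond_norm[OF assms(2,3) \<rho>])
  finally show ?thesis .
qed

lemma density_outer_normalized:
  assumes t: "(\<Sum>q<N. (cmod (\<alpha> q))\<^sup>2) = t" "t > 0"
  shows "density N (complex_of_real (1 / t) \<cdot>\<^sub>m outer N \<alpha>)"
proof -
  define \<rho> where "\<rho> = outer N (\<lambda>q. complex_of_real (1 / sqrt t) * \<alpha> q)"
  have \<rho>: "\<rho> = complex_of_real (1 / t) \<cdot>\<^sub>m outer N \<alpha>"
    unfolding \<rho>_def outer_smult using t by (simp add: real_sqrt_mult[symmetric] flip: of_real_mult)
  have "mtrace \<rho> = complex_of_real ((cmod (complex_of_real (1 / sqrt t)))\<^sup>2 * t)"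
    unfolding \<rho>_def mtrace_outer t(1)[symmetric] by (simp only: norm_mult power_mult_distrib sum_distrib_left)
  moreover have "(cmod (complex_of_real (1 / sqrt t)))\<^sup>2 * t = 1"
    using t by (simp only: norm_of_real power2_abs power_divide real_sqrt_pow2) simp
  ultimately have "mtrace \<rho> = 1" by (metis of_real_1)
  thus ?thesis unfolding density_def \<rho>[symmetric] \<rho>_def using psd_outer by simp
qed

lemma trace_norm_tensor_id_outer_le:
  assumes Q1: "quantum_channel d dB P1" and Q2: "quantum_channel d dB P2"
  shows "trace_norm (tensor_id d dB k (\<lambda>X. P1 X - P2 X) (outer (d * k) \<alpha>))
    \<le> (\<Sum>q<d * k. (cmod (\<alpha> q))\<^sup>2) * diamond_norm d dB (\<lambda>X. P1 X - P2 X)"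
proof -
  let ?D = "\<lambda>X. P1 X - P2 X"
  let ?Y = "tensor_id d dB k ?D (outer (d * k) \<alpha>)"
  define t where "t = (\<Sum>q<d * k. (cmod (\<alpha> q))\<^sup>2)"
  have L: "lin_map d dB ?D" using Q1 Q2 by (intro lin_map_diff) (auto simp: quantum_channel_def)
  have Y: "hermitian (dB * k) ?Y" using hermitian_tensor_id_diff[OF Q1 Q2 psd_outer] .
  have \<omega>: "outer (d * k) \<alpha> \<in> carrier_mat (d * k) (d * k)" by (simp add: outer_def)
  consider "t = 0" | "t > 0" unfolding t_def by (metis sum_nonneg zero_le_power2 less_eq_real_def)
  thus ?thesis
  proof cases
    case 1
    hence "\<alpha> q = 0" if "q < d * k" for q
      using that unfolding t_def by (subst (asm) sum_nonneg_eq_0_iff) auto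
    hence "outer (d * k) \<alpha> = complex_of_real 0 \<cdot>\<^sub>m outer (d * k) \<alpha>"
      by (intro eq_matI) (auto simp: outer_def)
    hence "?Y = complex_of_real 0 \<cdot>\<^sub>m ?Y" by (metis tensor_id_smult[OF L \<omega>])
    hence "trace_norm ?Y = 0" using trace_norm_smult_hermitian[OF Y, of 0] by simp
    thus ?thesis using 1 unfolding t_def[symmetric] by simp
  next
    case 2
    have "trace_norm (tensor_id d dB k ?D (complex_of_real (1 / t) \<cdot>\<^sub>m outer (d * k) \<alpha>))
        \<le> diamond_norm d dB ?D"
      using trace_norm_le_diamond_norm[OF Q1 Q2 density_outer_normalized[OF t_def[symmetric] 2]] .
    hence "trace_norm ?Y / t \<le> diamond_norm d dB ?D"
      unfolding tensor_id_smult[OF L \<omega>] trace_norm_smult_hermitian[OF Y] using 2 by simp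
    thus ?thesis using 2 unfolding t_def[symmetric] by (simp add: field_simps)
  qed
qed

section \<open>The support of \<open>M(\<Delta>)\<close> and the main estimate\<close>

lemma ptrace_B_carrier[simp]: "ptrace_B d dB A \<in> carrier_mat d d"
  by (simp add: ptrace_B_def)

lemma hermitian_ptrace_B:
  assumes "hermitian (dB * d) A"
  shows "hermitian d (ptrace_B d dB A)"
  unfolding hermitian_def
proof
  show "ptrace_B d dB A \<in> carrier_mat d d" by simp
  show "mat_adjoint (ptrace_B d dB A) = ptrace_B d dB A"
  proof (rule eq_matI)
    fix i j assume "i < dim_row (ptrace_B d dB A)" "j < dim_col (ptrace_B d dB A)"
    hence ij: "i < d" "j < d" by (auto simp: ptrace_B_def)
    have "cnj (A $$ (b * d + j, b * d + i)) = A $$ (b * d + i, b * d + j)" if "b < dB" for b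
      using hermitian_index[OF assms] mult_add_less_mult[OF that] ij by blast
    thus "mat_adjoint (ptrace_B d dB A) $$ (i, j) = ptrace_B d dB A $$ (i, j)"
      using ij by (simp add: ptrace_B_def cnj_sum)
  qed (auto simp: ptrace_B_def)
qed

text \<open>The vector \<open>|b\<rangle> \<otimes> w\<close> of \<open>C\<^sup>d\<^sup>B \<otimes> C\<^sup>d\<close>.\<close>
definition unit_tensor_vec :: "nat \<Rightarrow> nat \<Rightarrow> nat \<Rightarrow> complex vec \<Rightarrow> complex vec" where
  "unit_tensor_vec dB d b w = vec (dB * d) (\<lambda>u. if u div d = b then w $ (u mod d) else 0)"

lemma unit_tensor_vec_carrier[simp]:
  "unit_tensor_vec dB d b w \<in> carrier_vec (dB * d)" "dim_vec (unit_tensor_vec dB d b w) = dB * d"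
  by (simp_all add: unit_tensor_vec_def)

lemma index_unit_tensor_vec:
  "u < dB * d \<Longrightarrow> unit_tensor_vec dB d b w $ u = (if u div d = b then w $ (u mod d) else 0)"
  by (simp add: unit_tensor_vec_def)

lemma index_mult_mat_unit_tensor_vec:
  assumes "X \<in> carrier_mat m (dB * d)" "r < m" "b < dB"
  shows "(X *\<^sub>v unit_tensor_vec dB d b w) $ r = (\<Sum>x<d. X $$ (r, b * d + x) * w $ x)"
proof -
  have "(X *\<^sub>v unit_tensor_vec dB d b w) $ r
      = (\<Sum>u<dB * d. if u div d = b then X $$ (r, u) * w $ (u mod d) else 0)"
    unfolding index_mult_mat_vec_sum[OF assms(1) unit_tensor_vec_carrier(1) assms(2)]
    by (intro sum.cong refl) (simp add: index_unit_tensor_vec)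
  also have "\<dots> = (\<Sum>x<d. X $$ (r, b * d + x) * w $ x)"
    unfolding sum_lessThan_mult_block[OF assms(3)] by simp
  finally show ?thesis .
qed

lemma sum_quadratic_form_unit_tensor_vec:
  assumes A: "A \<in> carrier_mat (dB * d) (dB * d)" and w: "w \<in> carrier_vec d"
  shows "(\<Sum>b<dB. conjugate (unit_tensor_vec dB d b w) \<bullet> (A *\<^sub>v unit_tensor_vec dB d b w))
    = conjugate w \<bullet> (ptrace_B d dB A *\<^sub>v w)"
proof -
  have "conjugate (unit_tensor_vec dB d b w) \<bullet> (A *\<^sub>v unit_tensor_vec dB d b w)
      = (\<Sum>i<d. \<Sum>j<d. cnj (w $ i) * A $$ (b * d + i, b * d + j) * w $ j)" if b: "b < dB" for b
  proof -
    have "conjugate (unit_tensor_vec dB d b w) \<bullet> (A *\<^sub>v unit_tensor_vec dB d b w)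
        = (\<Sum>u<dB * d. if u div d = b
             then cnj (w $ (u mod d)) * (\<Sum>j<d. A $$ (u, b * d + j) * w $ j) else 0)"
      unfolding scalar_prod_def using A b
      by (auto simp: lessThan_atLeast0 index_mult_mat_unit_tensor_vec index_unit_tensor_vec
          simp del: index_mult_mat_vec intro!: sum.cong)
    also have "\<dots> = (\<Sum>i<d. \<Sum>j<d. cnj (w $ i) * A $$ (b * d + i, b * d + j) * w $ j)"
      unfolding sum_lessThan_mult_block[OF b] by (simp add: sum_distrib_left mult.assoc)
    finally show ?thesis .
  qed
  hence "(\<Sum>b<dB. conjugate (unit_tensor_vec dB d b w) \<bullet> (A *\<^sub>v unit_tensor_vec dB d b w))
      = (\<Sum>i<d. \<Sum>j<d. \<Sum>b<dB. cnj (w $ i) * A $$ (b * d + i, b * d + j) * w $ j)"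
    by (simp add: sum.swap[of _ "{..<dB}"])
  also have "\<dots> = conjugate w \<bullet> (ptrace_B d dB A *\<^sub>v w)"
    unfolding quadratic_form_sum[OF ptrace_B_carrier w]
    by (auto simp: ptrace_B_def sum_distrib_left sum_distrib_right mult_ac intro!: sum.cong)
  finally show ?thesis .
qed

lemma psd_ptrace_B_kernel:
  assumes A: "psd (dB * d) A" and w: "w \<in> carrier_vec d"
    and Mw: "ptrace_B d dB A *\<^sub>v w = 0\<^sub>v d" and b: "b < dB"
  shows "A *\<^sub>v unit_tensor_vec dB d b w = 0\<^sub>v (dB * d)"
proof -
  let ?q = "\<lambda>c. Re (conjugate (unit_tensor_vec dB d c w) \<bullet> (A *\<^sub>v unit_tensor_vec dB d c w))"
  have Ac: "A \<in> carrier_mat (dB * d) (dB * d)" using A unfolding psd_def by blast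
  have "(\<Sum>c<dB. ?q c) = Re (conjugate w \<bullet> (ptrace_B d dB A *\<^sub>v w))"
    unfolding Re_sum[symmetric] sum_quadratic_form_unit_tensor_vec[OF Ac w] ..
  also have "\<dots> = 0" using Mw w by simp
  finally have "?q b = 0"
    using A b unfolding psd_def by (subst (asm) sum_nonneg_eq_0_iff) auto
  thus ?thesis by (rule psd_kernel[OF A unit_tensor_vec_carrier(1)])
qed

lemma hermitian_ptrace_B_mat_abs_kernel:
  assumes J: "hermitian (dB * d) J" and w: "w \<in> carrier_vec d"
    and Mw: "ptrace_B d dB (mat_abs J) *\<^sub>v w = 0\<^sub>v d" and b: "b < dB" and r: "r < dB * d"
  shows "(\<Sum>x<d. J $$ (r, b * d + x) * w $ x) = 0"
proof -
  have Jc: "J \<in> carrier_mat (dB * d) (dB * d)" using J unfolding hermitian_def by blast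
  have "J *\<^sub>v unit_tensor_vec dB d b w = 0\<^sub>v (dB * d)"
    by (rule mat_abs_kernel[OF J unit_tensor_vec_carrier(1) psd_ptrace_B_kernel[OF psd_mat_abs[OF J] w Mw b]])
  thus ?thesis using index_mult_mat_unit_tensor_vec[OF Jc r b, of w] r by simp
qed

text \<open>Entrywise form of \<open>J (1 \<otimes> P) = J\<close>.\<close>
lemma choi_mult_support_projection:
  assumes J: "hermitian (dB * d) J" and P: "P \<in> carrier_mat d d"
    and MP: "ptrace_B d dB (mat_abs J) * P = ptrace_B d dB (mat_abs J)"
    and b: "b < dB" and r: "r < dB * d" and c: "c < d"
  shows "(\<Sum>x<d. J $$ (r, b * d + x) * P $$ (x, c)) = J $$ (r, b * d + c)"
proof -
  let ?M = "ptrace_B d dB (mat_abs J)"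
  define w where "w = unit_vec d c - col P c"
  have w: "w \<in> carrier_vec d" unfolding w_def using P by (intro minus_carrier_vec) (auto intro: carrier_vecI)
  have "?M *\<^sub>v w = col ?M c - col (?M * P) c"
    unfolding w_def using P c
    by (simp add: mult_minus_distrib_mat_vec[of _ d d] mult_mat_vec_unit_vec col_mult2[of _ d d _ d])
  hence "?M *\<^sub>v w = 0\<^sub>v d" unfolding MP using c by (auto intro!: eq_vecI simp: ptrace_B_def)
  hence "(\<Sum>x<d. J $$ (r, b * d + x) * w $ x) = 0"
    by (rule hermitian_ptrace_B_mat_abs_kernel[OF J w _ b r])
  moreover have "(\<Sum>x<d. J $$ (r, b * d + x) * w $ x)
      = J $$ (r, b * d + c) - (\<Sum>x<d. J $$ (r, b * d + x) * P $$ (x, c))"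
    unfolding w_def using P c by (simp add: right_diff_distrib sum_subtractf if_distrib[of "\<lambda>t. _ * t"] cong: if_cong)
  ultimately show ?thesis by simp
qed

text \<open>In Dirac notation: the input \<open>(1 \<otimes> P)|\<Omega>\<rangle>\<langle>\<Omega>|(1 \<otimes> P)\<close> is mapped to
  \<open>(1 \<otimes> P) J (1 \<otimes> P) = J\<close>.\<close>
lemma tensor_id_outer_projection:
  assumes S: "lin_map d dB S" and J: "hermitian (dB * d) (choi d dB S)" and P: "hermitian d P"
    and JP: "\<And>b r c. b < dB \<Longrightarrow> r < dB * d \<Longrightarrow> c < d \<Longrightarrow>
       (\<Sum>x<d. choi d dB S $$ (r, b * d + x) * P $$ (x, c)) = choi d dB S $$ (r, b * d + c)"
  shows "tensor_id d dB d S (outer (d * d) (\<lambda>q. P $$ (q mod d, q div d))) = choi d dB S"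
proof (rule eq_matI)
  let ?J = "choi d dB S"
  fix r s assume "r < dim_row ?J" "s < dim_col ?J"
  hence rs: "r < dB * d" "s < dB * d" by (auto simp: choi_def)
  have PJ: "(\<Sum>x<d. ?J $$ (b * d + x, s) * P $$ (c, x)) = ?J $$ (b * d + c, s)" if "b < dB" "c < d" for b c
  proof -
    have "(\<Sum>x<d. ?J $$ (b * d + x, s) * P $$ (c, x)) = cnj (\<Sum>x<d. ?J $$ (s, b * d + x) * P $$ (x, c))"
      unfolding cnj_sum using that rs
      by (intro sum.cong refl) (simp add: hermitian_index[OF J] hermitian_index[OF P] mult_add_less_mult)
    also have "\<dots> = ?J $$ (b * d + c, s)"
      using JP[OF that(1) rs(2) that(2)] that rs by (simp add: hermitian_index[OF J] mult_add_less_mult)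
    finally show ?thesis .
  qed
  have r': "r div d < dB" "r mod d < d" and s': "s div d < dB" "s mod d < d"
    using rs less_mult_imp_div_less mod_less_of_less_mult by auto
  have "tensor_id d dB d S (outer (d * d) (\<lambda>q. P $$ (q mod d, q div d))) $$ (r, s)
    = (\<Sum>a<d. (\<Sum>b<d. ?J $$ (r div d * d + a, s div d * d + b) * P $$ (b, s mod d)) * P $$ (r mod d, a))"
    unfolding tensor_id_choi[OF S rs] using r' s'
    by (auto simp: outer_def mult_add_less_mult hermitian_index[OF P] sum_distrib_left sum_distrib_right
        mult_ac intro!: sum.cong)
  also have "\<dots> = (\<Sum>a<d. ?J $$ (r div d * d + a, s) * P $$ (r mod d, a))"
    using JP[OF s'(1) _ s'(2)] r' by (simp add: mult_add_less_mult)
  also have "\<dots> = ?J $$ (r, s)" using PJ[OF r'] by simp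
  finally show "tensor_id d dB d S (outer (d * d) (\<lambda>q. P $$ (q mod d, q div d))) $$ (r, s) = ?J $$ (r, s)" .
qed (auto simp: choi_def tensor_id_def)

lemma sum_cmod_sq_entries_projection:
  assumes P: "hermitian d P" and PP: "P * P = P"
  shows "(\<Sum>q<d * d. (cmod (P $$ (q mod d, q div d)))\<^sup>2) = Re (mtrace P)"
proof -
  have Pc: "P \<in> carrier_mat d d" using P unfolding hermitian_def by blast
  have "mtrace P = mtrace (P * P)" using PP by simp
  also have "\<dots> = (\<Sum>x<d. \<Sum>a<d. P $$ (x, a) * cnj (P $$ (x, a)))"
    unfolding mtrace_def using Pc
    by (auto simp: index_mult_mat_sum[OF Pc Pc] hermitian_index[OF P] simp del: index_mult_mat(1) intro!: sum.cong)
  also have "\<dots> = complex_of_real (\<Sum>a<d. \<Sum>x<d. (cmod (P $$ (x, a)))\<^sup>2)"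
    unfolding of_real_sum complex_norm_square by (rule sum.swap)
  finally show ?thesis by (simp add: sum_lessThan_mult)
qed

lemma hermitian_choi_diff:
  assumes "quantum_channel d dB P1" "quantum_channel d dB P2"
  shows "hermitian (dB * d) (choi d dB (\<lambda>X. P1 X - P2 X))"
  using assms unfolding choi_diff[OF assms[unfolded quantum_channel_def, THEN conjunct1]]
  by (intro hermitian_minus psd_hermitian psd_choi)

lemma trace_norm_choi_le_rank_diamond_norm:
  assumes d: "d > 0" and Q1: "quantum_channel d dB P1" and Q2: "quantum_channel d dB P2"
  shows "trace_norm (choi d dB (\<lambda>X. P1 X - P2 X))
    \<le> real (mat_rank (M_op d dB (\<lambda>X. P1 X - P2 X))) * diamond_norm d dB (\<lambda>X. P1 X - P2 X)"
proof -
  let ?D = "\<lambda>X. P1 X - P2 X"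
  let ?M = "M_op d dB ?D"
  have L: "lin_map d dB ?D" using Q1 Q2 by (intro lin_map_diff) (auto simp: quantum_channel_def)
  have J: "hermitian (dB * d) (choi d dB ?D)" by (rule hermitian_choi_diff[OF Q1 Q2])
  have "hermitian d ?M"
    unfolding M_op_def by (rule hermitian_ptrace_B[OF psd_hermitian[OF psd_mat_abs[OF J]]])
  then obtain P where P: "hermitian d P" "P * P = P" and MP: "?M * P = ?M"
    and rank: "Re (mtrace P) \<le> real (vec_space.rank d ?M)"
    by (rule support_projection)
  have "tensor_id d dB d ?D (outer (d * d) (\<lambda>q. P $$ (q mod d, q div d))) = choi d dB ?D"
    using P(1) MP unfolding M_op_def hermitian_def
    by (intro tensor_id_outer_projection[OF L J P(1)] choi_mult_support_projection[OF J]) auto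
  hence "trace_norm (choi d dB ?D) \<le> Re (mtrace P) * diamond_norm d dB ?D"
    using trace_norm_tensor_id_outer_le[OF Q1 Q2, of d "\<lambda>q. P $$ (q mod d, q div d)"]
    unfolding sum_cmod_sq_entries_projection[OF P] by simp
  also have "\<dots> \<le> real (mat_rank ?M) * diamond_norm d dB ?D"
    using rank diamond_norm_nonneg[OF d Q1 Q2] unfolding mat_rank_def M_op_def
    by (intro mult_right_mono) (auto simp: ptrace_B_def)
  finally show ?thesis .
qed

theorem corollary1:
  fixes d dB :: nat and \<Phi>1 \<Phi>2 :: "complex mat \<Rightarrow> complex mat"
  assumes "d > 0"
    and "quantum_channel d dB \<Phi>1"
    and "quantum_channel d dB \<Phi>2"
  shows "me_norm d dB (\<lambda>X. \<Phi>1 X - \<Phi>2 X)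
           \<le> real (mat_rank (M_op d dB (\<lambda>X. \<Phi>1 X - \<Phi>2 X))) / real d
              * diamond_norm d dB (\<lambda>X. \<Phi>1 X - \<Phi>2 X)"
proof -
  let ?D = "\<lambda>X. \<Phi>1 X - \<Phi>2 X"
  have "me_norm d dB ?D = trace_norm (choi d dB ?D) / real d"
    using trace_norm_smult_hermitian[OF hermitian_choi_diff[OF assms(2,3)], of "1 / real d"]
    unfolding me_norm_def by simp
  also have "\<dots> \<le> real (mat_rank (M_op d dB ?D)) * diamond_norm d dB ?D / real d"
    using trace_norm_choi_le_rank_diamond_norm[OF assms] by (simp add: divide_right_mono)
  finally show ?thesis by simp
qed

end
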